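(* Let $n_T,n_R,n_E\ge 1$, let $\mathbf{H}_m\in\mathbb{C}^{n_R\times n_T}$ and $\mathbf{H}_e\in\mathbb{C}^{n_E\times n_T}$ be fixed matrices, let $N_m,N_e>0$, and let $C_s({\text{SNR}})$ be the secrecy capacity $$C_s({\text{SNR}})=\frac{1}{n_R}\max_{\substack{\mathbf{K}_x\succeq \mathbf{0}\\ \operatorname{tr}(\mathbf{K}_x)\le n_RN_m{\text{SNR}}}}\left[\log\det\!\left(\mathbf{I}+\tfrac{1}{N_m}\mathbf{H}_m\mathbf{K}_x\mathbf{H}_m^\dagger\right)-\log\det\!\left(\mathbf{I}+\tfrac{1}{N_e}\mathbf{H}_e\mathbf{K}_x\mathbf{H}_e^\dagger\right)\right].$$ Then the minimum bit energy required for reliable communication under secrecy constraints is $$\frac{E_b}{N_0}_{s,\min}=\frac{\log 2}{[\lambda_{\max}(\mathbf{\Phi})]^+},\qquad \mathbf{\Phi}=\mathbf{H}_m^\dagger\mathbf{H}_m-\frac{N_m}{N_e}\mathbf{H}_e^\dagger\mathbf{H}_e,$$ where $[x]^+=\max(x,0)$ and the right-hand side is interpreted as $+\infty$ when $[\lambda_{\max}(\mathbf{\Phi})]^+=0$.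
   Context: Setting: MIMO Gaussian wiretap channel $\mathbf{y}_m=\mathbf{H}_m\mathbf{x}+\mathbf{n}_m$, $\mathbf{y}_e=\mathbf{H}_e\mathbf{x}+\mathbf{n}_e$ with independent zero-mean Gaussian noises of covariances $N_m\mathbf{I}$, $N_e\mathbf{I}$, input covariance $\mathbf{K}_x$ (Hermitian positive semidefinite) with power $P=\operatorname{tr}(\mathbf{K}_x)$ bound, and ${\text{SNR}}=P/(n_RN_m)$; natural logarithms. The minimum bit energy under secrecy constraints is $\frac{E_b}{N_0}_{s,\min}=\inf_{{\text{SNR}}>0}\frac{{\text{SNR}}\,\log 2}{C_s({\text{SNR}})}$, which for a concave $C_s$ with $C_s(0)=0$ equals $\frac{\log 2}{\dot C_s(0)}$, where $\dot C_s(0)$ is the derivative of $C_s$ with respect to ${\text{SNR}}$ at ${\text{SNR}}=0$. $\lambda_{\max}$ denotes the largest eigenvalue. *)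

theory Defs
  imports "Jordan_Normal_Form.Schur_Decomposition" "HOL-Library.Extended_Real"
begin

definition mat_trace :: "complex mat \<Rightarrow> complex" where
  "mat_trace K = (\<Sum>i<dim_row K. K $$ (i,i))"

definition psd_mat :: "nat \<Rightarrow> complex mat \<Rightarrow> bool" where
  "psd_mat n K \<longleftrightarrow> K \<in> carrier_mat n n \<and> mat_adjoint K = K \<and>
     (\<forall>v \<in> carrier_vec n. 0 \<le> Re ((K *\<^sub>v v) \<bullet>c v))"

(* log det (I + (1/N) H K H^dagger); the determinant is real positive for PSD K *)
definition logdet_term :: "complex mat \<Rightarrow> real \<Rightarrow> complex mat \<Rightarrow> real" where
  "logdet_term H N K =
     ln (Re (det (1\<^sub>m (dim_row H) + (complex_of_real (1 / N)) \<cdot>\<^sub>m (H * K * mat_adjoint H))))"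

definition secrecy_rate ::
  "complex mat \<Rightarrow> complex mat \<Rightarrow> real \<Rightarrow> real \<Rightarrow> complex mat \<Rightarrow> real" where
  "secrecy_rate Hm He Nm Ne K = logdet_term Hm Nm K - logdet_term He Ne K"

(* C_s(SNR) = 1/n_R * max over PSD K with tr K <= n_R N_m SNR (max written as Sup; it is attained) *)
definition secrecy_capacity ::
  "nat \<Rightarrow> complex mat \<Rightarrow> complex mat \<Rightarrow> real \<Rightarrow> real \<Rightarrow> real \<Rightarrow> real" where
  "secrecy_capacity nT Hm He Nm Ne snr =
     (1 / real (dim_row Hm)) *
     Sup {secrecy_rate Hm He Nm Ne K | K. psd_mat nT K \<and>
            Re (mat_trace K) \<le> real (dim_row Hm) * Nm * snr}"

(* Eb/N0_{s,min} = inf_{SNR>0} SNR log 2 / C_s(SNR), valued in extended reals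
   (a ratio with C_s(SNR) = 0 is +infinity; C_s >= 0 always) *)
definition ebn0_s_min ::
  "nat \<Rightarrow> complex mat \<Rightarrow> complex mat \<Rightarrow> real \<Rightarrow> real \<Rightarrow> ereal" where
  "ebn0_s_min nT Hm He Nm Ne =
     (INF snr \<in> {0<..}. (if secrecy_capacity nT Hm He Nm Ne snr > 0
                         then ereal (snr * ln 2 / secrecy_capacity nT Hm He Nm Ne snr)
                         else \<infinity>))"

(* largest eigenvalue of a Hermitian matrix (all eigenvalues are real) *)
definition lambda_max :: "complex mat \<Rightarrow> real" where
  "lambda_max A = Max (Re ` {k. eigenvalue A k})"

end

theory Submission
  imports Defs "Jordan_Normal_Form.Spectral_Radius"
begin

(* For an input covariance K = L L\<^sup>*, put A = L\<^sup>* H\<^sub>m\<^sup>* H\<^sub>m L / N\<^sub>m and B = L\<^sup>* H\<^sub>e\<^sup>* H\<^sub>e L / N\<^sub>e.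
   Then A \<le> B + [\<lambda>\<^sub>m\<^sub>a\<^sub>x(\<Phi>)]\<^sup>+ L\<^sup>* L / N\<^sub>m in the Loewner order, which forces
   log det(1 + A) - log det(1 + B) \<le> [\<lambda>\<^sub>m\<^sub>a\<^sub>x(\<Phi>)]\<^sup>+ tr K / N\<^sub>m, so C\<^sub>s(SNR) \<le> [\<lambda>\<^sub>m\<^sub>a\<^sub>x(\<Phi>)]\<^sup>+ SNR.
   Conversely, sending all power along a top eigenvector of \<Phi> gives
   C\<^sub>s(SNR) \<ge> \<lambda>\<^sub>m\<^sub>a\<^sub>x(\<Phi>) SNR / (1 + a SNR) for a constant a.  Hence SNR log 2 / C\<^sub>s(SNR) never
   drops below log 2 / [\<lambda>\<^sub>m\<^sub>a\<^sub>x(\<Phi>)]\<^sup>+ and tends to it as SNR \<rightarrow> 0. *)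

abbreviation quad_form :: "complex mat \<Rightarrow> complex vec \<Rightarrow> real" where
  "quad_form A x \<equiv> Re ((A *\<^sub>v x) \<bullet>c x)"

abbreviation sq_norm_cvec :: "complex vec \<Rightarrow> real" where
  "sq_norm_cvec x \<equiv> Re (x \<bullet>c x)"

section \<open>Adjoints and quadratic forms\<close>

lemma dim_mat_adjoint[simp]:
  "dim_row (mat_adjoint A) = dim_col A" "dim_col (mat_adjoint A) = dim_row A"
  unfolding mat_adjoint_def by auto

lemma index_mat_adjoint[simp]:
  "i < dim_col A \<Longrightarrow> j < dim_row A \<Longrightarrow> mat_adjoint A $$ (i,j) = cnj (A $$ (j,i))"
  unfolding mat_adjoint_def by (auto simp: mat_of_rows_def)

lemma mat_adjoint_carrier[simp]: "A \<in> carrier_mat n m \<Longrightarrow> mat_adjoint A \<in> carrier_mat m n"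
  by (metis dim_mat_adjoint carrier_matD carrier_matI)

lemma mult_carrier_mat_square[simp]:
  "A \<in> carrier_mat n n \<Longrightarrow> B \<in> carrier_mat n n \<Longrightarrow> A * B \<in> carrier_mat n n"
  by simp

lemma mat_adjoint_mult_vec_carrier[simp]:
  "U \<in> carrier_mat m n \<Longrightarrow> w \<in> carrier_vec m \<Longrightarrow> mat_adjoint U *\<^sub>v w \<in> carrier_vec n"
  by (metis mat_adjoint_carrier mult_mat_vec_carrier)

lemma mat_adjoint_mat_adjoint[simp]: "mat_adjoint (mat_adjoint (A::complex mat)) = A"
  by (rule eq_matI) auto

lemma mat_adjoint_one[simp]: "mat_adjoint (1\<^sub>m n :: complex mat) = 1\<^sub>m n"
  by (intro eq_matI) auto

lemma mat_adjoint_mult: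
  assumes "(A::complex mat) \<in> carrier_mat n m" "B \<in> carrier_mat m k"
  shows "mat_adjoint (A * B) = mat_adjoint B * mat_adjoint A"
proof (rule eq_matI)
  fix i j assume "i < dim_row (mat_adjoint B * mat_adjoint A)" "j < dim_col (mat_adjoint B * mat_adjoint A)"
  then have "i < k" "j < n" using assms by auto
  then show "mat_adjoint (A * B) $$ (i, j) = (mat_adjoint B * mat_adjoint A) $$ (i, j)"
    using assms by (simp add: scalar_prod_def cnj_sum mult.commute)
qed (use assms in auto)

lemma mat_adjoint_add:
  "(A::complex mat) \<in> carrier_mat n m \<Longrightarrow> B \<in> carrier_mat n m \<Longrightarrow>
   mat_adjoint (A + B) = mat_adjoint A + mat_adjoint B"
  by (intro eq_matI) auto

lemma mat_adjoint_minus: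
  "(A::complex mat) \<in> carrier_mat n m \<Longrightarrow> B \<in> carrier_mat n m \<Longrightarrow>
   mat_adjoint (A - B) = mat_adjoint A - mat_adjoint B"
  by (intro eq_matI) auto

lemma mat_adjoint_smult: "mat_adjoint ((c::complex) \<cdot>\<^sub>m A) = cnj c \<cdot>\<^sub>m mat_adjoint A"
  by (intro eq_matI) auto

lemma mat_adjoint_congruence_hermitian:
  assumes L: "(L::complex mat) \<in> carrier_mat n m" and G: "G \<in> carrier_mat n n"
    and hG: "mat_adjoint G = G"
  shows "mat_adjoint (mat_adjoint L * G * L) = mat_adjoint L * G * L"
proof -
  have "mat_adjoint (mat_adjoint L * G * L) = mat_adjoint L * mat_adjoint (mat_adjoint L * G)"
    by (rule mat_adjoint_mult[of _ m n _ m]) (use L G in auto)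
  also have "mat_adjoint (mat_adjoint L * G) = G * L"
    by (subst mat_adjoint_mult[of _ m n _ n]) (use L G hG in auto)
  finally show ?thesis using L G by (simp add: assoc_mult_mat[of _ m n _ n _ m])
qed

lemma mat_adjoint_gram: "(H::complex mat) \<in> carrier_mat m n \<Longrightarrow> mat_adjoint (mat_adjoint H * H) = mat_adjoint H * H"
  by (subst mat_adjoint_mult[of _ n m _ n]) auto

lemma cscalar_prod_mat_adjoint:
  assumes A: "(A::complex mat) \<in> carrier_mat n m" and x: "x \<in> carrier_vec m" and u: "u \<in> carrier_vec n"
  shows "(A *\<^sub>v x) \<bullet>c u = x \<bullet>c (mat_adjoint A *\<^sub>v u)"
proof -
  have "(A *\<^sub>v x) \<bullet>c u = (\<Sum>i<n. \<Sum>k<m. A $$ (i,k) * x $ k * cnj (u $ i))"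
    using A x u by (simp add: scalar_prod_def lessThan_atLeast0 sum_distrib_right)
  also have "\<dots> = (\<Sum>k<m. \<Sum>i<n. A $$ (i,k) * x $ k * cnj (u $ i))"
    by (rule sum.swap)
  also have "\<dots> = x \<bullet>c (mat_adjoint A *\<^sub>v u)"
    using A x u by (simp add: scalar_prod_def lessThan_atLeast0 sum_distrib_left cnj_sum mult_ac)
  finally show ?thesis .
qed

lemma cscalar_prod_smult_left:
  "v \<in> carrier_vec n \<Longrightarrow> w \<in> carrier_vec n \<Longrightarrow> ((a::complex) \<cdot>\<^sub>v v) \<bullet>c w = a * (v \<bullet>c w)"
  by (simp add: scalar_prod_def sum_distrib_left mult_ac)

lemma cscalar_prod_smult_right:
  "v \<in> carrier_vec n \<Longrightarrow> w \<in> carrier_vec n \<Longrightarrow> v \<bullet>c ((a::complex) \<cdot>\<^sub>v w) = cnj a * (v \<bullet>c w)"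
  by (simp add: scalar_prod_def sum_distrib_left mult_ac)

lemma cscalar_prod_self_real: "(v::complex vec) \<bullet>c v = complex_of_real (sq_norm_cvec v)"
  by (simp add: scalar_prod_def complex_eq_iff Im_sum complex_mult_cnj)

lemma sq_norm_cvec_nonneg: "sq_norm_cvec v \<ge> 0"
  by (simp add: scalar_prod_def Re_sum complex_mult_cnj sum_nonneg)

lemma sq_norm_cvec_pos: assumes "v \<in> carrier_vec n" "v \<noteq> 0\<^sub>v n" shows "sq_norm_cvec v > 0"
proof -
  have "v \<bullet>c v \<noteq> 0" using assms by (metis conjugate_square_eq_0_vec)
  with conjugate_square_ge_0_vec[of v] have "v \<bullet>c v > 0" by auto
  then show ?thesis by (simp add: less_complex_def)
qed

lemma sq_norm_cvec_eq_sum: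
  "y \<in> carrier_vec n \<Longrightarrow> sq_norm_cvec y = (\<Sum>i<n. Re (y $ i * cnj (y $ i)))"
  by (simp add: scalar_prod_def Re_sum lessThan_atLeast0)

lemma smult_mat_mult_vec:
  "X \<in> carrier_mat m n \<Longrightarrow> x \<in> carrier_vec n \<Longrightarrow> (c \<cdot>\<^sub>m X) *\<^sub>v x = (c::complex) \<cdot>\<^sub>v (X *\<^sub>v x)"
  by (intro eq_vecI) (auto simp: scalar_prod_def sum_distrib_left mult.assoc)

lemma quad_form_smult:
  "X \<in> carrier_mat n n \<Longrightarrow> x \<in> carrier_vec n \<Longrightarrow> ((c \<cdot>\<^sub>m X) *\<^sub>v x) \<bullet>c x = (c::complex) * ((X *\<^sub>v x) \<bullet>c x)"
  by (simp add: smult_mat_mult_vec cscalar_prod_smult_left[of _ n])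

lemma quad_form_smult_vec:
  "(E::complex mat) \<in> carrier_mat n n \<Longrightarrow> v \<in> carrier_vec n \<Longrightarrow>
   quad_form E (complex_of_real a \<cdot>\<^sub>v v) = a * a * quad_form E v"
  by (simp add: mult_mat_vec cscalar_prod_smult_left[of _ n] cscalar_prod_smult_right[of _ n])

lemma quad_form_minus:
  assumes X: "(X::complex mat) \<in> carrier_mat n n" and Y: "Y \<in> carrier_mat n n" and x: "x \<in> carrier_vec n"
  shows "((X - Y) *\<^sub>v x) \<bullet>c x = (X *\<^sub>v x) \<bullet>c x - (Y *\<^sub>v x) \<bullet>c x"
  using X Y x by (simp add: minus_mult_distrib_mat_vec[OF X Y x] minus_scalar_prod_distrib[of _ n])

lemma quad_form_one_plus:
  assumes X: "(X::complex mat) \<in> carrier_mat n n" and z: "z \<in> carrier_vec n"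
  shows "((1\<^sub>m n + X) *\<^sub>v z) \<bullet>c z = z \<bullet>c z + (X *\<^sub>v z) \<bullet>c z"
  using X z by (simp add: add_mult_distrib_mat_vec[of _ n n] add_scalar_prod_distrib[of _ n])

lemma quad_form_gram:
  assumes H: "(H::complex mat) \<in> carrier_mat m n" and x: "x \<in> carrier_vec n"
  shows "((mat_adjoint H * H) *\<^sub>v x) \<bullet>c x = (H *\<^sub>v x) \<bullet>c (H *\<^sub>v x)"
proof -
  have "((mat_adjoint H * H) *\<^sub>v x) \<bullet>c x = (mat_adjoint H *\<^sub>v (H *\<^sub>v x)) \<bullet>c x"
    using H x by (simp add: assoc_mult_mat_vec[of _ n m H n])
  also have "\<dots> = (H *\<^sub>v x) \<bullet>c (mat_adjoint (mat_adjoint H) *\<^sub>v x)"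
    by (rule cscalar_prod_mat_adjoint) (use H x in auto)
  finally show ?thesis by simp
qed

lemma mult_mat_vec_assoc3:
  assumes "A \<in> carrier_mat n k" "B \<in> carrier_mat k l" "C \<in> carrier_mat l m" "w \<in> carrier_vec m"
  shows "(A * B * C) *\<^sub>v w = A *\<^sub>v (B *\<^sub>v (C *\<^sub>v w))"
proof -
  have "(A * B * C) *\<^sub>v w = (A * B) *\<^sub>v (C *\<^sub>v w)"
    by (rule assoc_mult_mat_vec) (use assms in auto)
  also have "\<dots> = A *\<^sub>v (B *\<^sub>v (C *\<^sub>v w))"
    by (rule assoc_mult_mat_vec) (use assms in auto)
  finally show ?thesis .
qed

lemma quad_form_congruence:
  assumes S: "(S::complex mat) \<in> carrier_mat n m" and X: "X \<in> carrier_mat n n" and c: "c \<in> carrier_vec m"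
  shows "((mat_adjoint S * X * S) *\<^sub>v c) \<bullet>c c = (X *\<^sub>v (S *\<^sub>v c)) \<bullet>c (S *\<^sub>v c)"
proof -
  have "(mat_adjoint S * X * S) *\<^sub>v c = mat_adjoint S *\<^sub>v (X *\<^sub>v (S *\<^sub>v c))"
    by (rule mult_mat_vec_assoc3) (use S X c in auto)
  also have "\<dots> \<bullet>c c = (X *\<^sub>v (S *\<^sub>v c)) \<bullet>c (mat_adjoint (mat_adjoint S) *\<^sub>v c)"
    by (rule cscalar_prod_mat_adjoint) (use S X c in auto)
  finally show ?thesis by simp
qed

lemma quad_form_scaled_congruence_gram:
  assumes H: "(H::complex mat) \<in> carrier_mat k n" and L: "L \<in> carrier_mat n m" and x: "x \<in> carrier_vec m"
  shows "quad_form (complex_of_real r \<cdot>\<^sub>m (mat_adjoint L * (mat_adjoint H * H) * L)) x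
    = r * sq_norm_cvec (H *\<^sub>v (L *\<^sub>v x))"
proof -
  have G: "mat_adjoint H * H \<in> carrier_mat n n" using mult_carrier_mat[OF mat_adjoint_carrier[OF H] H] .
  have "((complex_of_real r \<cdot>\<^sub>m (mat_adjoint L * (mat_adjoint H * H) * L)) *\<^sub>v x) \<bullet>c x
      = complex_of_real r * (((mat_adjoint H * H) *\<^sub>v (L *\<^sub>v x)) \<bullet>c (L *\<^sub>v x))"
    by (subst quad_form_smult[of _ m]) (use quad_form_congruence[OF L G x] L G x in auto)
  also have "\<dots> = complex_of_real r * ((H *\<^sub>v (L *\<^sub>v x)) \<bullet>c (H *\<^sub>v (L *\<^sub>v x)))"
    using quad_form_gram[OF H, of "L *\<^sub>v x"] L x by simp
  finally show ?thesis by simp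
qed

section \<open>Unitary and real diagonal matrices\<close>

definition unitary_mat :: "nat \<Rightarrow> complex mat \<Rightarrow> bool" where
  "unitary_mat n U \<longleftrightarrow> U \<in> carrier_mat n n \<and> mat_adjoint U * U = 1\<^sub>m n"

definition real_diag_mat :: "nat \<Rightarrow> (nat \<Rightarrow> real) \<Rightarrow> complex mat" where
  "real_diag_mat n d = mat n n (\<lambda>(i,j). if i = j then complex_of_real (d i) else 0)"

lemma unitary_mat_carrier: "unitary_mat n U \<Longrightarrow> U \<in> carrier_mat n n"
  unfolding unitary_mat_def by auto

lemma unitary_mat_right: "unitary_mat n U \<Longrightarrow> U * mat_adjoint U = 1\<^sub>m n"
  unfolding unitary_mat_def using mat_mult_left_right_inverse[of "mat_adjoint U" n U] by auto

lemma unitary_mat_mult: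
  assumes "unitary_mat n U" "unitary_mat n V" shows "unitary_mat n (U * V)"
proof -
  have U: "U \<in> carrier_mat n n" and V: "V \<in> carrier_mat n n" using assms unitary_mat_def by auto
  have "mat_adjoint (U * V) * (U * V) = mat_adjoint V * ((mat_adjoint U * U) * V)"
    using U V by (simp add: mat_adjoint_mult[OF U V] assoc_mult_mat[of _ n n _ n _ n])
  also have "\<dots> = 1\<^sub>m n" using assms V unfolding unitary_mat_def by simp
  finally show ?thesis using U V unfolding unitary_mat_def by auto
qed

lemma unitary_mat_cancel:
  assumes "unitary_mat n U" "X \<in> carrier_mat n k"
  shows "mat_adjoint U * (U * X) = X" "U * (mat_adjoint U * X) = X"
proof -
  have U: "U \<in> carrier_mat n n" using assms unitary_mat_def by auto
  have "mat_adjoint U * (U * X) = (mat_adjoint U * U) * X"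
    using U assms by (simp add: assoc_mult_mat[of _ n n U n X k])
  then show "mat_adjoint U * (U * X) = X" using assms unfolding unitary_mat_def by simp
  have "U * (mat_adjoint U * X) = (U * mat_adjoint U) * X"
    using U assms by (simp add: assoc_mult_mat[of U n n _ n X k])
  then show "U * (mat_adjoint U * X) = X" using assms unitary_mat_right[OF assms(1)] by simp
qed

lemma unitary_mat_sq_norm:
  assumes "unitary_mat n U" "w \<in> carrier_vec n"
  shows "(mat_adjoint U *\<^sub>v w) \<bullet>c (mat_adjoint U *\<^sub>v w) = w \<bullet>c w"
proof -
  have U: "U \<in> carrier_mat n n" using assms unitary_mat_def by auto
  have "(mat_adjoint U *\<^sub>v w) \<bullet>c (mat_adjoint U *\<^sub>v w) = w \<bullet>c (U *\<^sub>v (mat_adjoint U *\<^sub>v w))"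
    using cscalar_prod_mat_adjoint[of "mat_adjoint U" n n w "mat_adjoint U *\<^sub>v w"] U assms by simp
  also have "U *\<^sub>v (mat_adjoint U *\<^sub>v w) = (U * mat_adjoint U) *\<^sub>v w"
    by (rule assoc_mult_mat_vec[symmetric]) (use U assms in auto)
  finally show ?thesis using unitary_mat_right[OF assms(1)] assms by simp
qed

lemma unitary_mat_adjoint_col:
  assumes "unitary_mat n U" "i < n" shows "mat_adjoint U *\<^sub>v col U i = unit_vec n i"
proof -
  have "U \<in> carrier_mat n n" using assms unitary_mat_def by auto
  then have "mat_adjoint U *\<^sub>v col U i = col (mat_adjoint U * U) i"
    using assms by (simp add: col_mult2[of _ n n])
  then show ?thesis using assms unfolding unitary_mat_def by simp
qed

lemma unitary_mat_col_norm:
  assumes "unitary_mat n U" "i < n" shows "col U i \<bullet>c col U i = 1"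
proof -
  have "U \<in> carrier_mat n n" using assms unitary_mat_def by auto
  then have "col U i \<bullet>c col U i = (mat_adjoint U * U) $$ (i,i)"
    using assms(2) by (simp add: scalar_prod_def mult.commute)
  then show ?thesis using assms unfolding unitary_mat_def by simp
qed

lemma real_diag_mat_carrier[simp]: "real_diag_mat n d \<in> carrier_mat n n"
  and dim_real_diag_mat[simp]: "dim_row (real_diag_mat n d) = n" "dim_col (real_diag_mat n d) = n"
  unfolding real_diag_mat_def by auto

lemma real_diag_mat_mult_vec_carrier[simp]: "real_diag_mat n d *\<^sub>v y \<in> carrier_vec n"
  by (intro carrier_vecI) simp

lemma index_real_diag_mat[simp]:
  "i < n \<Longrightarrow> j < n \<Longrightarrow> real_diag_mat n d $$ (i,j) = (if i = j then complex_of_real (d i) else 0)"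
  unfolding real_diag_mat_def by auto

lemma mat_adjoint_real_diag_mat[simp]: "mat_adjoint (real_diag_mat n d) = real_diag_mat n d"
  by (rule eq_matI) auto

lemma real_diag_mat_cong: "(\<And>i. i < n \<Longrightarrow> a i = b i) \<Longrightarrow> real_diag_mat n a = real_diag_mat n b"
  by (intro eq_matI) auto

lemma real_diag_mat_one: "real_diag_mat n (\<lambda>_. 1) = 1\<^sub>m n"
  by (intro eq_matI) auto

lemma real_diag_mat_mult: "real_diag_mat n a * real_diag_mat n b = real_diag_mat n (\<lambda>i. a i * b i)"
proof (rule eq_matI)
  fix i j assume "i < dim_row (real_diag_mat n (\<lambda>i. a i * b i))" "j < dim_col (real_diag_mat n (\<lambda>i. a i * b i))"
  then have "i < n" "j < n" by auto
  then show "(real_diag_mat n a * real_diag_mat n b) $$ (i, j) = real_diag_mat n (\<lambda>i. a i * b i) $$ (i, j)"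
    by (auto simp: scalar_prod_def if_distrib cong: if_cong)
qed auto

lemma mult_vec_real_diag_mat:
  "y \<in> carrier_vec n \<Longrightarrow> real_diag_mat n d *\<^sub>v y = vec n (\<lambda>i. complex_of_real (d i) * y $ i)"
  by (intro eq_vecI) (auto simp: scalar_prod_def if_distrib[of "\<lambda>x. x * _"] cong: if_cong)

lemma mult_mat_unit_vec: "(A::complex mat) \<in> carrier_mat m n \<Longrightarrow> i < n \<Longrightarrow> A *\<^sub>v unit_vec n i = col A i"
  by (intro eq_vecI) (auto dest: carrier_matD)

lemma col_mult_real_diag_mat:
  assumes V: "(V::complex mat) \<in> carrier_mat n n" and i: "i < n"
  shows "col (V * real_diag_mat n d) i = complex_of_real (d i) \<cdot>\<^sub>v col V i"
proof -
  have "col (real_diag_mat n d) i = complex_of_real (d i) \<cdot>\<^sub>v unit_vec n i"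
    using i by (intro eq_vecI) auto
  then show ?thesis
    using V i by (simp add: col_mult2[OF V real_diag_mat_carrier i] mult_mat_vec[OF V] mult_mat_unit_vec)
qed

lemma det_real_diag_mat: "det (real_diag_mat n d) = complex_of_real (\<Prod>i<n. d i)"
proof -
  have "det (real_diag_mat n d) = prod_list (diag_mat (real_diag_mat n d))"
    by (rule det_upper_triangular) (auto simp: upper_triangular_def)
  also have "\<dots> = (\<Prod>i<n. complex_of_real (d i))"
    unfolding diag_mat_def
    by (simp add: prod.distinct_set_conv_list[symmetric] lessThan_atLeast0)
  finally show ?thesis by simp
qed

lemma mult_udu_col:
  assumes U: "unitary_mat n U" and i: "i < n"
  shows "(U * real_diag_mat n d * mat_adjoint U) *\<^sub>v col U i = complex_of_real (d i) \<cdot>\<^sub>v col U i"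
proof -
  have Uc: "U \<in> carrier_mat n n" using U unitary_mat_carrier by auto
  have "(U * real_diag_mat n d * mat_adjoint U) *\<^sub>v col U i
      = U *\<^sub>v (real_diag_mat n d *\<^sub>v (mat_adjoint U *\<^sub>v col U i))"
    by (rule mult_mat_vec_assoc3) (use Uc i in auto)
  also have "real_diag_mat n d *\<^sub>v (mat_adjoint U *\<^sub>v col U i) = complex_of_real (d i) \<cdot>\<^sub>v unit_vec n i"
    using i by (simp add: unitary_mat_adjoint_col[OF U i] mult_vec_real_diag_mat) (intro eq_vecI, auto)
  also have "U *\<^sub>v \<dots> = complex_of_real (d i) \<cdot>\<^sub>v col U i"
    using Uc i by (simp add: mult_mat_vec mult_mat_unit_vec)
  finally show ?thesis .
qed

lemma quad_form_udu_col:
  assumes U: "unitary_mat n U" and i: "i < n"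
  shows "((U * real_diag_mat n d * mat_adjoint U) *\<^sub>v col U i) \<bullet>c col U i = complex_of_real (d i)"
proof -
  have "U \<in> carrier_mat n n" using U unitary_mat_carrier by auto
  then have "((U * real_diag_mat n d * mat_adjoint U) *\<^sub>v col U i) \<bullet>c col U i
      = complex_of_real (d i) * (col U i \<bullet>c col U i)"
    unfolding mult_udu_col[OF U i] using i by (intro cscalar_prod_smult_left[of _ n]) auto
  then show ?thesis using unitary_mat_col_norm[OF U i] by simp
qed

lemma quad_form_udu_le:
  assumes U: "unitary_mat n U" and w: "w \<in> carrier_vec n" and d: "\<And>i. i < n \<Longrightarrow> d i \<le> c"
  shows "quad_form (U * real_diag_mat n d * mat_adjoint U) w \<le> c * sq_norm_cvec w"
proof -
  have Uc: "U \<in> carrier_mat n n" using U unitary_mat_carrier by auto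
  define y where "y = mat_adjoint U *\<^sub>v w"
  have y: "y \<in> carrier_vec n" unfolding y_def using Uc w by (simp add: mult_mat_vec_carrier)
  have "(U * real_diag_mat n d * mat_adjoint U) *\<^sub>v w = U *\<^sub>v (real_diag_mat n d *\<^sub>v y)"
    unfolding y_def by (rule mult_mat_vec_assoc3) (use Uc w in auto)
  then have "quad_form (U * real_diag_mat n d * mat_adjoint U) w = quad_form (real_diag_mat n d) y"
    using cscalar_prod_mat_adjoint[OF Uc, of "real_diag_mat n d *\<^sub>v y" w] Uc w y unfolding y_def by simp
  also have "(real_diag_mat n d *\<^sub>v y) \<bullet>c y = (\<Sum>i<n. complex_of_real (d i) * (y $ i * cnj (y $ i)))"
    using y by (simp add: mult_vec_real_diag_mat scalar_prod_def lessThan_atLeast0 mult_ac)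
  also have "Re \<dots> = (\<Sum>i<n. d i * Re (y $ i * cnj (y $ i)))"
    by (simp add: Re_sum)
  also have "\<dots> \<le> (\<Sum>i<n. c * Re (y $ i * cnj (y $ i)))"
    by (rule sum_mono) (use d in \<open>auto intro: mult_right_mono simp: complex_mult_cnj\<close>)
  also have "\<dots> = c * sq_norm_cvec y" by (simp only: sq_norm_cvec_eq_sum[OF y] sum_distrib_left)
  also have "y \<bullet>c y = w \<bullet>c w" unfolding y_def by (rule unitary_mat_sq_norm[OF U w])
  finally show ?thesis .
qed

lemma index_udu:
  assumes U: "U \<in> carrier_mat n n" and ij: "i < n" "j < n"
  shows "(U * real_diag_mat n d * mat_adjoint U) $$ (i,j)
    = (\<Sum>k<n. U $$ (i,k) * complex_of_real (d k) * cnj (U $$ (j,k)))"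
proof -
  have UD: "(U * real_diag_mat n d) $$ (i,k) = U $$ (i,k) * complex_of_real (d k)" if "k < n" for k
    using U ij that by (simp add: scalar_prod_def lessThan_atLeast0 if_distrib[of "\<lambda>x. _ * x"] cong: if_cong)
  show ?thesis
    using U ij UD unfolding lessThan_atLeast0 by (simp add: scalar_prod_def)
qed

lemma det_udu:
  assumes U: "unitary_mat n U"
  shows "det (U * real_diag_mat n d * mat_adjoint U) = complex_of_real (\<Prod>i<n. d i)"
proof -
  have Uc: "U \<in> carrier_mat n n" using U unitary_mat_carrier by auto
  have "det (U * real_diag_mat n d * mat_adjoint U) = det (real_diag_mat n d) * det (mat_adjoint U * U)"
    using Uc by (simp add: det_mult[of _ n] mult_ac)
  also have "\<dots> = det (real_diag_mat n d)" using U unfolding unitary_mat_def by simp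
  finally show ?thesis by (simp add: det_real_diag_mat)
qed

lemma eigenvalues_udu:
  assumes U: "unitary_mat n U"
  shows "{k. eigenvalue (U * real_diag_mat n d * mat_adjoint U) k} = (\<lambda>i. complex_of_real (d i)) ` {..<n}"
proof (intro equalityI subsetI)
  let ?A = "U * real_diag_mat n d * mat_adjoint U"
  have Uc: "U \<in> carrier_mat n n" using U unitary_mat_carrier by auto
  fix k assume "k \<in> {k. eigenvalue ?A k}"
  then obtain v where v: "v \<in> carrier_vec n" "v \<noteq> 0\<^sub>v n" "?A *\<^sub>v v = k \<cdot>\<^sub>v v"
    unfolding eigenvalue_def eigenvector_def using Uc by auto
  define y where "y = mat_adjoint U *\<^sub>v v"
  have y: "y \<in> carrier_vec n" unfolding y_def using Uc v by (simp add: mult_mat_vec_carrier)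
  have "U *\<^sub>v y = v"
    using assoc_mult_mat_vec[of U n n "mat_adjoint U" n v] unitary_mat_right[OF U] Uc v
    unfolding y_def by simp
  then have y0: "y \<noteq> 0\<^sub>v n" using v Uc by auto
  have "real_diag_mat n d *\<^sub>v y = mat_adjoint U *\<^sub>v (?A *\<^sub>v v)"
  proof -
    have "?A *\<^sub>v v = U *\<^sub>v (real_diag_mat n d *\<^sub>v y)"
      unfolding y_def by (rule mult_mat_vec_assoc3) (use Uc v in auto)
    then have "mat_adjoint U *\<^sub>v (?A *\<^sub>v v) = (mat_adjoint U * U) *\<^sub>v (real_diag_mat n d *\<^sub>v y)"
      by (simp add: assoc_mult_mat_vec[symmetric, of _ n n U n] Uc y)
    then show ?thesis using U y unfolding unitary_mat_def by simp
  qed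
  also have "\<dots> = k \<cdot>\<^sub>v y" unfolding v(3) y_def by (rule mult_mat_vec) (use Uc v in auto)
  finally have Dy: "real_diag_mat n d *\<^sub>v y = k \<cdot>\<^sub>v y" .
  obtain j where j: "j < n" "y $ j \<noteq> 0" using y0 y by (metis eq_vecI carrier_vecD index_zero_vec(1,2))
  have "complex_of_real (d j) * y $ j = k * y $ j"
    using arg_cong[OF Dy, of "\<lambda>w. w $ j"] j y by (simp add: mult_vec_real_diag_mat)
  then show "k \<in> (\<lambda>i. complex_of_real (d i)) ` {..<n}" using j by auto
next
  fix k assume "k \<in> (\<lambda>i. complex_of_real (d i)) ` {..<n}"
  then obtain i where i: "i < n" and k: "k = complex_of_real (d i)" by auto
  have "col U i \<noteq> 0\<^sub>v n" using unitary_mat_col_norm[OF U i] by auto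
  then have "eigenvector (U * real_diag_mat n d * mat_adjoint U) (col U i) k"
    unfolding eigenvector_def k using mult_udu_col[OF U i] unitary_mat_carrier[OF U] i by simp
  then show "k \<in> {k. eigenvalue (U * real_diag_mat n d * mat_adjoint U) k}"
    unfolding eigenvalue_def by auto
qed

lemma lambda_max_udu:
  "unitary_mat n U \<Longrightarrow> lambda_max (U * real_diag_mat n d * mat_adjoint U) = Max (d ` {..<n})"
  unfolding lambda_max_def eigenvalues_udu image_image by simp

section \<open>The spectral theorem for Hermitian matrices\<close>

definition normalize_cvec :: "complex vec \<Rightarrow> complex vec" where
  "normalize_cvec w = complex_of_real (1 / sqrt (sq_norm_cvec w)) \<cdot>\<^sub>v w"

lemma normalize_cvec_carrier[simp]: "w \<in> carrier_vec n \<Longrightarrow> normalize_cvec w \<in> carrier_vec n"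
  unfolding normalize_cvec_def by simp

lemma cscalar_prod_normalize_cvec:
  "v \<in> carrier_vec n \<Longrightarrow> w \<in> carrier_vec n \<Longrightarrow> normalize_cvec v \<bullet>c normalize_cvec w
    = complex_of_real (1 / sqrt (sq_norm_cvec v) * (1 / sqrt (sq_norm_cvec w))) * (v \<bullet>c w)"
  unfolding normalize_cvec_def by (simp add: cscalar_prod_smult_left[of _ n] cscalar_prod_smult_right[of _ n])

lemma normalize_cvec_self:
  assumes "v \<in> carrier_vec n" "v \<noteq> 0\<^sub>v n" shows "normalize_cvec v \<bullet>c normalize_cvec v = 1"
proof -
  have r: "sq_norm_cvec v > 0" by (rule sq_norm_cvec_pos[OF assms])
  have "normalize_cvec v \<bullet>c normalize_cvec v
      = complex_of_real (1 / sqrt (sq_norm_cvec v) * (1 / sqrt (sq_norm_cvec v))) * complex_of_real (sq_norm_cvec v)"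
    using cscalar_prod_normalize_cvec[OF assms(1) assms(1)] cscalar_prod_self_real[of v] by metis
  also have "\<dots> = 1" using r by (simp flip: of_real_mult)
  finally show ?thesis .
qed

lemma normalize_cvec_unit: "v \<bullet>c v = 1 \<Longrightarrow> normalize_cvec v = v"
  unfolding normalize_cvec_def by simp

lemma exists_unit_eigenvector:
  assumes A: "(A::complex mat) \<in> carrier_mat n n" and n: "n > 0"
  shows "\<exists>e v. v \<in> carrier_vec n \<and> v \<bullet>c v = 1 \<and> A *\<^sub>v v = e \<cdot>\<^sub>v v"
proof -
  from spectrum_non_empty[OF A n] obtain k where "eigenvalue A k" unfolding spectrum_def by auto
  then obtain v where v: "v \<in> carrier_vec n" "v \<noteq> 0\<^sub>v n" "A *\<^sub>v v = k \<cdot>\<^sub>v v"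
    unfolding eigenvalue_def eigenvector_def using A by auto
  have "A *\<^sub>v normalize_cvec v = k \<cdot>\<^sub>v normalize_cvec v"
    unfolding normalize_cvec_def using A v by (simp add: mult_mat_vec[OF A] smult_smult_assoc mult.commute)
  then show ?thesis using v normalize_cvec_self[OF v(1,2)] normalize_cvec_carrier[OF v(1)] by blast
qed

lemma unitary_mat_of_orthogonal_cols:
  assumes ws: "set ws \<subseteq> carrier_vec n" "corthogonal ws" "length ws = n"
  shows "unitary_mat n (mat_of_cols n (map normalize_cvec ws))"
proof -
  define W where "W = mat_of_cols n (map normalize_cvec ws)"
  have W: "W \<in> carrier_mat n n" unfolding W_def using mat_of_cols_carrier(1)[of n "map normalize_cvec ws"] ws by simp
  have wsi: "ws ! i \<in> carrier_vec n" "ws ! i \<noteq> 0\<^sub>v n" if "i < n" for i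
    using ws corthogonalD[OF ws(2), of i i] that by auto
  have Wij: "W $$ (i,j) = normalize_cvec (ws ! j) $ i" if "i < n" "j < n" for i j
    unfolding W_def using ws that by (simp add: mat_of_cols_index)
  have "mat_adjoint W * W = 1\<^sub>m n"
  proof (rule eq_matI)
    fix i j assume "i < dim_row (1\<^sub>m n :: complex mat)" "j < dim_col (1\<^sub>m n :: complex mat)"
    then have ij: "i < n" "j < n" by auto
    have "(mat_adjoint W * W) $$ (i, j) = normalize_cvec (ws ! j) \<bullet>c normalize_cvec (ws ! i)"
      using W ij carrier_vecD[OF normalize_cvec_carrier[OF wsi(1)[OF ij(1)]]]
      by (simp add: scalar_prod_def Wij mult.commute)
    also have "\<dots> = 1\<^sub>m n $$ (i, j)"
    proof (cases "i = j")
      case True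
      then show ?thesis using normalize_cvec_self[OF wsi[OF ij(1)]] ij by simp
    next
      case False
      have "ws ! j \<bullet>c ws ! i = 0" using corthogonalD[OF ws(2), of j i] ij ws False by auto
      then show ?thesis using cscalar_prod_normalize_cvec[OF wsi(1)[OF ij(2)] wsi(1)[OF ij(1)]] ij False by simp
    qed
    finally show "(mat_adjoint W * W) $$ (i, j) = 1\<^sub>m n $$ (i, j)" .
  qed (use W in auto)
  then show ?thesis using W unfolding unitary_mat_def W_def by blast
qed

lemma unitary_completion:
  assumes v: "v \<in> carrier_vec n" and vv: "v \<bullet>c v = 1"
  shows "\<exists>W. unitary_mat n W \<and> col W 0 = v"
proof -
  have v0: "v \<noteq> 0\<^sub>v n" using vv v by auto
  have n: "n > 0" using v0 v by (cases n) auto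
  interpret cof_vec_space n "TYPE(complex)" .
  define b where "b = basis_completion v"
  from basis_completion[OF v v0, folded b_def]
  have b: "set b \<subseteq> carrier_vec n" and dist_b: "distinct b"
    and indep: "\<not> lin_dep (set b)" and len_b: "length b = n" and hdb: "hd b = v" by auto
  from hdb len_b n obtain vs where bv: "b = v # vs" by (cases b, auto)
  define ws where "ws = gram_schmidt n b"
  from gram_schmidt_result[OF b dist_b indep refl, folded ws_def]
  have ws: "set ws \<subseteq> carrier_vec n" "corthogonal ws" "length ws = n"
    by (auto simp: len_b)
  from gram_schmidt_hd[OF v, of vs, folded bv] have "hd ws = v" unfolding ws_def .
  then have "ws ! 0 = v" using ws n by (cases ws) auto
  then have "col (mat_of_cols n (map normalize_cvec ws)) 0 = v"
    using ws n v normalize_cvec_unit[OF vv] by (simp add: col_mat_of_cols)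
  then show ?thesis using unitary_mat_of_orthogonal_cols[OF ws] by blast
qed

definition direct_sum_one :: "nat \<Rightarrow> complex mat \<Rightarrow> complex mat" where
  "direct_sum_one m U = mat (Suc m) (Suc m)
     (\<lambda>(i,j). if i = 0 \<and> j = 0 then 1 else if i = 0 \<or> j = 0 then 0 else U $$ (i - 1, j - 1))"

lemma direct_sum_one_carrier[simp]: "direct_sum_one m U \<in> carrier_mat (Suc m) (Suc m)"
  and dim_direct_sum_one[simp]: "dim_row (direct_sum_one m U) = Suc m" "dim_col (direct_sum_one m U) = Suc m"
  unfolding direct_sum_one_def by simp_all

lemma unitary_mat_direct_sum_one:
  assumes U: "unitary_mat m U" shows "unitary_mat (Suc m) (direct_sum_one m U)"
proof -
  let ?E = "direct_sum_one m U"
  have Uc: "U \<in> carrier_mat m m" using U unitary_mat_carrier by auto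
  have "mat_adjoint ?E * ?E = 1\<^sub>m (Suc m)"
  proof (rule eq_matI)
    fix i j assume "i < dim_row (1\<^sub>m (Suc m) :: complex mat)" "j < dim_col (1\<^sub>m (Suc m) :: complex mat)"
    then have ij: "i < Suc m" "j < Suc m" by auto
    have "(mat_adjoint ?E * ?E) $$ (i,j) = (\<Sum>k\<in>{0..<Suc m}. cnj (?E $$ (k,i)) * ?E $$ (k,j))"
      using ij by (simp add: scalar_prod_def)
    also have "\<dots> = cnj (?E $$ (0,i)) * ?E $$ (0,j) + (\<Sum>k<m. cnj (?E $$ (Suc k,i)) * ?E $$ (Suc k,j))"
      unfolding lessThan_atLeast0[symmetric] by (rule sum.lessThan_Suc_shift)
    also have "\<dots> = 1\<^sub>m (Suc m) $$ (i,j)"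
    proof (cases i; cases j)
      fix i' j' assume i: "i = Suc i'" and j: "j = Suc j'"
      have "(\<Sum>k<m. cnj (?E $$ (Suc k,i)) * ?E $$ (Suc k,j)) = (mat_adjoint U * U) $$ (i', j')"
        using Uc ij i j by (simp add: direct_sum_one_def scalar_prod_def lessThan_atLeast0)
      then show ?thesis using U ij i j unfolding unitary_mat_def by (simp add: direct_sum_one_def)
    qed (use ij in \<open>auto simp: direct_sum_one_def\<close>)
    finally show "(mat_adjoint ?E * ?E) $$ (i, j) = 1\<^sub>m (Suc m) $$ (i, j)" .
  qed auto
  then show ?thesis unfolding unitary_mat_def by simp
qed

lemma direct_sum_one_udu:
  assumes U: "unitary_mat m U" and A: "A \<in> carrier_mat (Suc m) (Suc m)"
    and first: "\<And>i. i < Suc m \<Longrightarrow>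
      A $$ (i,0) = (if i = 0 then complex_of_real r else 0) \<and> A $$ (0,i) = (if i = 0 then complex_of_real r else 0)"
    and block: "\<And>i j. i < m \<Longrightarrow> j < m \<Longrightarrow> A $$ (Suc i, Suc j) = (U * real_diag_mat m d * mat_adjoint U) $$ (i,j)"
  shows "A = direct_sum_one m U * real_diag_mat (Suc m) (\<lambda>i. if i = 0 then r else d (i - 1))
    * mat_adjoint (direct_sum_one m U)"
    (is "A = ?E * real_diag_mat (Suc m) ?d * mat_adjoint ?E")
proof (rule eq_matI)
  have Uc: "U \<in> carrier_mat m m" using U unitary_mat_carrier by auto
  fix i j assume "i < dim_row (?E * real_diag_mat (Suc m) ?d * mat_adjoint ?E)"
    "j < dim_col (?E * real_diag_mat (Suc m) ?d * mat_adjoint ?E)"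
  then have ij: "i < Suc m" "j < Suc m" by auto
  have "(?E * real_diag_mat (Suc m) ?d * mat_adjoint ?E) $$ (i,j)
      = (\<Sum>k<Suc m. ?E $$ (i,k) * complex_of_real (?d k) * cnj (?E $$ (j,k)))"
    by (rule index_udu[OF direct_sum_one_carrier ij])
  also have "\<dots> = ?E $$ (i,0) * complex_of_real (?d 0) * cnj (?E $$ (j,0))
      + (\<Sum>k<m. ?E $$ (i,Suc k) * complex_of_real (?d (Suc k)) * cnj (?E $$ (j,Suc k)))"
    by (rule sum.lessThan_Suc_shift)
  also have "\<dots> = A $$ (i,j)"
  proof (cases i; cases j)
    fix i' j' assume i: "i = Suc i'" and j: "j = Suc j'"
    have "(\<Sum>k<m. ?E $$ (i,Suc k) * complex_of_real (?d (Suc k)) * cnj (?E $$ (j,Suc k)))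
        = (U * real_diag_mat m d * mat_adjoint U) $$ (i', j')"
      using index_udu[OF Uc, of i' j' d] ij i j by (simp add: direct_sum_one_def)
    then show ?thesis using block[of i' j'] ij i j by (simp add: direct_sum_one_def)
  qed (use ij first in \<open>auto simp: direct_sum_one_def\<close>)
  finally show "A $$ (i, j) = (?E * real_diag_mat (Suc m) ?d * mat_adjoint ?E) $$ (i, j)" by simp
qed (use A in auto)

lemma hermitian_deflation:
  assumes A: "A \<in> carrier_mat n n" "mat_adjoint A = A" and v: "A *\<^sub>v v = e \<cdot>\<^sub>v v"
    and W: "unitary_mat n W" "col W 0 = v" and n: "0 < n"
  shows "mat_adjoint (mat_adjoint W * A * W) = mat_adjoint W * A * W"
    and "\<And>i. i < n \<Longrightarrow> (mat_adjoint W * A * W) $$ (i,0) = (if i = 0 then complex_of_real (Re e) else 0)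
      \<and> (mat_adjoint W * A * W) $$ (0,i) = (if i = 0 then complex_of_real (Re e) else 0)"
proof -
  let ?A' = "mat_adjoint W * A * W"
  have Wc: "W \<in> carrier_mat n n" using W unitary_mat_carrier by auto
  show herm: "mat_adjoint ?A' = ?A'" by (rule mat_adjoint_congruence_hermitian[OF Wc A])
  have A'c: "?A' \<in> carrier_mat n n" using Wc A by (metis mat_adjoint_carrier mult_carrier_mat)
  have vc: "v \<in> carrier_vec n" by (metis W(2) Wc carrier_matD(1) carrier_vecI col_dim)
  have "col ?A' 0 = (mat_adjoint W * A) *\<^sub>v col W 0"
    by (rule col_mult2[OF mult_carrier_mat[OF mat_adjoint_carrier[OF Wc] A(1)] Wc n])
  also have "\<dots> = mat_adjoint W *\<^sub>v (A *\<^sub>v v)"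
    unfolding W(2) by (rule assoc_mult_mat_vec) (use Wc A vc in auto)
  also have "\<dots> = e \<cdot>\<^sub>v unit_vec n 0"
    unfolding v using mult_mat_vec[of "mat_adjoint W" n n v e] Wc vc unitary_mat_adjoint_col[OF W(1) n] W(2)
    by simp
  finally have col0: "?A' $$ (i,0) = (if i = 0 then e else 0)" if "i < n" for i
    using that A'c by (metis (no_types, lifting) carrier_matD(1) col_def index_smult_vec(1) index_unit_vec(1,3)
        index_vec mult_zero_right n mult.right_neutral)
  have herm_ij: "?A' $$ (i,j) = cnj (?A' $$ (j,i))" if "i < n" "j < n" for i j
    using herm A'c that by (metis carrier_matD index_mat_adjoint)
  have "e = complex_of_real (Re e)"
    using herm_ij[OF n n] col0[OF n] by (simp add: complex_eq_iff)
  then show "?A' $$ (i,0) = (if i = 0 then complex_of_real (Re e) else 0)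
      \<and> ?A' $$ (0,i) = (if i = 0 then complex_of_real (Re e) else 0)" if "i < n" for i
    using herm_ij[OF n that] col0[OF that] by (auto simp: complex_eq_iff)
qed

theorem hermitian_spectral_decomposition:
  assumes "(A::complex mat) \<in> carrier_mat n n" "mat_adjoint A = A"
  shows "\<exists>U d. unitary_mat n U \<and> A = U * real_diag_mat n d * mat_adjoint U"
  using assms
proof (induct n arbitrary: A)
  case 0
  have "A = 1\<^sub>m 0 * real_diag_mat 0 (\<lambda>_. 0) * mat_adjoint (1\<^sub>m 0)" using 0 by (intro eq_matI) auto
  moreover have "unitary_mat 0 (1\<^sub>m 0)" unfolding unitary_mat_def by auto
  ultimately show ?case by blast
next
  case (Suc m A)
  obtain e v where v: "v \<in> carrier_vec (Suc m)" "v \<bullet>c v = 1" "A *\<^sub>v v = e \<cdot>\<^sub>v v"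
    using exists_unit_eigenvector[OF Suc.prems(1)] by auto
  obtain W where W: "unitary_mat (Suc m) W" "col W 0 = v" using unitary_completion[OF v(1,2)] by auto
  have Wc: "W \<in> carrier_mat (Suc m) (Suc m)" using W unitary_mat_carrier by auto
  define A' where "A' = mat_adjoint W * A * W"
  have A'c: "A' \<in> carrier_mat (Suc m) (Suc m)" unfolding A'_def using Wc Suc.prems
    by (metis mat_adjoint_carrier mult_carrier_mat)
  note defl = hermitian_deflation[OF Suc.prems v(3) W zero_less_Suc, folded A'_def]
  define B where "B = mat m m (\<lambda>(i,j). A' $$ (Suc i, Suc j))"
  have "mat_adjoint B = B"
    using defl(1) A'c unfolding B_def by (intro eq_matI) (auto, metis Suc_less_eq carrier_matD index_mat_adjoint)
  then obtain U' d' where U': "unitary_mat m U'" and BU: "B = U' * real_diag_mat m d' * mat_adjoint U'"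
    using Suc.hyps[of B] unfolding B_def by auto
  let ?E = "direct_sum_one m U'" and ?d = "\<lambda>i. if i = 0 then Re e else d' (i - 1)"
  have A'eq: "A' = ?E * real_diag_mat (Suc m) ?d * mat_adjoint ?E"
  proof (rule direct_sum_one_udu[OF U' A'c defl(2)])
    show "A' $$ (Suc i, Suc j) = (U' * real_diag_mat m d' * mat_adjoint U') $$ (i, j)" if "i < m" "j < m" for i j
      using that unfolding BU[symmetric] B_def by simp
  qed
  have "W * A' * mat_adjoint W = W * (mat_adjoint W * (A * W)) * mat_adjoint W"
    unfolding A'_def using Wc Suc.prems(1) by (simp add: assoc_mult_mat[of _ "Suc m" "Suc m" A _ W])
  also have "W * (mat_adjoint W * (A * W)) = A * W"
    by (rule unitary_mat_cancel(2)[OF W(1)]) (use Suc.prems(1) Wc in auto)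
  also have "A * W * mat_adjoint W = A"
    using Suc.prems(1) Wc unitary_mat_right[OF W(1)] by (simp add: assoc_mult_mat[of A _ _ W _ _ "Suc m"])
  finally have "A = W * A' * mat_adjoint W" ..
  also have "\<dots> = (W * ?E) * real_diag_mat (Suc m) ?d * mat_adjoint (W * ?E)"
    unfolding A'eq using Wc mat_adjoint_carrier[OF Wc] mat_adjoint_carrier[OF direct_sum_one_carrier]
    by (simp del: mat_adjoint_carrier
        add: mat_adjoint_mult[OF Wc direct_sum_one_carrier] assoc_mult_mat[of _ "Suc m" "Suc m" _ "Suc m" _ "Suc m"])
  finally show ?case using unitary_mat_mult[OF W(1) unitary_mat_direct_sum_one[OF U']] by blast
qed

section \<open>Positive semidefinite matrices\<close>

lemma udu_eigenvalue_lower_bound: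
  assumes U: "unitary_mat n U" and i: "i < n"
    and lb: "\<And>x. x \<in> carrier_vec n \<Longrightarrow> c * sq_norm_cvec x \<le> quad_form (U * real_diag_mat n d * mat_adjoint U) x"
  shows "c \<le> d i"
  using lb[of "col U i"] unitary_mat_carrier[OF U] i
  by (simp add: quad_form_udu_col[OF U i] unitary_mat_col_norm[OF U i])

lemma psd_mat_spectral:
  assumes "psd_mat n K"
  obtains U d where "unitary_mat n U" "K = U * real_diag_mat n d * mat_adjoint U" "\<And>i. i < n \<Longrightarrow> d i \<ge> 0"
proof -
  obtain U d where U: "unitary_mat n U" and K: "K = U * real_diag_mat n d * mat_adjoint U"
    using hermitian_spectral_decomposition assms unfolding psd_mat_def by blast
  have "d i \<ge> 0" if "i < n" for i
    by (rule udu_eigenvalue_lower_bound[OF U that]) (use assms K in \<open>simp add: psd_mat_def\<close>)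
  with U K that show ?thesis by blast
qed

lemma psd_mat_factor:
  assumes "psd_mat n K" shows "\<exists>L \<in> carrier_mat n n. K = L * mat_adjoint L"
proof -
  obtain Q k where Q: "unitary_mat n Q" and K: "K = Q * real_diag_mat n k * mat_adjoint Q"
    and k: "\<And>i. i < n \<Longrightarrow> k i \<ge> 0"
    using psd_mat_spectral[OF assms] by blast
  have Qc: "Q \<in> carrier_mat n n" using Q unitary_mat_carrier by auto
  define L where "L = Q * real_diag_mat n (\<lambda>i. sqrt (k i))"
  have "real_diag_mat n (\<lambda>i. sqrt (k i)) * real_diag_mat n (\<lambda>i. sqrt (k i)) = real_diag_mat n k"
    unfolding real_diag_mat_mult by (rule real_diag_mat_cong) (use k in simp)
  then have "real_diag_mat n (\<lambda>i. sqrt (k i)) * (real_diag_mat n (\<lambda>i. sqrt (k i)) * mat_adjoint Q)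
      = real_diag_mat n k * mat_adjoint Q"
    by (metis Qc assoc_mult_mat mat_adjoint_carrier real_diag_mat_carrier)
  then have "L * mat_adjoint L = K"
    unfolding L_def K using Qc
    by (simp add: mat_adjoint_mult[OF Qc real_diag_mat_carrier] assoc_mult_mat[of _ n n _ n _ n])
  moreover have "L \<in> carrier_mat n n" unfolding L_def using Qc by simp
  ultimately show ?thesis by blast
qed

lemma psd_mat_scaled_congruence_gram:
  assumes H: "(H::complex mat) \<in> carrier_mat k n" and L: "L \<in> carrier_mat n m" and r: "r \<ge> 0"
  shows "psd_mat m (complex_of_real r \<cdot>\<^sub>m (mat_adjoint L * (mat_adjoint H * H) * L))"
proof -
  have G: "mat_adjoint H * H \<in> carrier_mat n n" using mult_carrier_mat[OF mat_adjoint_carrier[OF H] H] .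
  have "mat_adjoint L * (mat_adjoint H * H) * L \<in> carrier_mat m m"
    using L G by (metis mat_adjoint_carrier mult_carrier_mat)
  moreover have "mat_adjoint (mat_adjoint L * (mat_adjoint H * H) * L) = mat_adjoint L * (mat_adjoint H * H) * L"
    by (rule mat_adjoint_congruence_hermitian[OF L G mat_adjoint_gram[OF H]])
  ultimately show ?thesis
    unfolding psd_mat_def using quad_form_scaled_congruence_gram[OF H L] r sq_norm_cvec_nonneg
    by (simp add: mat_adjoint_smult)
qed

lemma mat_trace_mult_comm:
  assumes "(A::complex mat) \<in> carrier_mat n m" "B \<in> carrier_mat m n"
  shows "mat_trace (A * B) = mat_trace (B * A)"
proof -
  have "mat_trace (A * B) = (\<Sum>i<n. \<Sum>k<m. A $$ (i,k) * B $$ (k,i))"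
    using assms by (simp add: mat_trace_def scalar_prod_def lessThan_atLeast0)
  also have "\<dots> = (\<Sum>k<m. \<Sum>i<n. B $$ (k,i) * A $$ (i,k))"
    by (subst sum.swap) (simp add: mult.commute)
  also have "\<dots> = mat_trace (B * A)"
    using assms by (simp add: mat_trace_def scalar_prod_def lessThan_atLeast0)
  finally show ?thesis .
qed

lemma mat_trace_smult: "X \<in> carrier_mat n n \<Longrightarrow> mat_trace (c \<cdot>\<^sub>m X) = c * mat_trace X"
  unfolding mat_trace_def sum_distrib_left by (rule sum.cong) auto

lemma mat_trace_congruence:
  assumes Q: "(Q::complex mat) \<in> carrier_mat n n" and F: "F \<in> carrier_mat n n"
  shows "mat_trace (mat_adjoint Q * F * Q) = (\<Sum>i<n. (F *\<^sub>v col Q i) \<bullet>c col Q i)"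
proof -
  have "(mat_adjoint Q * F * Q) $$ (i,i) = (F *\<^sub>v col Q i) \<bullet>c col Q i" if i: "i < n" for i
  proof -
    have "(mat_adjoint Q * F * Q) $$ (i,i) = (mat_adjoint Q * (F * Q)) $$ (i,i)"
      using Q F by (simp add: assoc_mult_mat[of _ n n F n Q n])
    also have "\<dots> = (\<Sum>k\<in>{0..<n}. (F *\<^sub>v col Q i) $ k * cnj (col Q i $ k))"
      using Q F i by (simp add: scalar_prod_def mult.commute)
    finally show ?thesis using Q by (simp add: scalar_prod_def)
  qed
  then show ?thesis unfolding mat_trace_def using Q F by simp
qed

lemma mat_trace_unitary_congruence:
  assumes Q: "unitary_mat n Q" and F: "(F::complex mat) \<in> carrier_mat n n"
  shows "mat_trace (mat_adjoint Q * F * Q) = mat_trace F"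
proof -
  have Qc: "Q \<in> carrier_mat n n" using Q unitary_mat_carrier by auto
  have "mat_trace (mat_adjoint Q * F * Q) = mat_trace (mat_adjoint Q * (F * Q))"
    using Qc F by (simp add: assoc_mult_mat[of _ n n F n Q n])
  also have "\<dots> = mat_trace ((F * Q) * mat_adjoint Q)"
    by (rule mat_trace_mult_comm[of _ n n]) (use Qc F in auto)
  also have "(F * Q) * mat_adjoint Q = F"
    using Qc F unitary_mat_right[OF Q] by (simp add: assoc_mult_mat[of _ n n _ n _ n])
  finally show ?thesis .
qed

lemma Re_mat_trace_psd_nonneg:
  assumes "psd_mat n E" shows "Re (mat_trace E) \<ge> 0"
proof -
  have E: "E \<in> carrier_mat n n" using assms psd_mat_def by auto
  have "mat_trace E = (\<Sum>i<n. (E *\<^sub>v col (1\<^sub>m n) i) \<bullet>c col (1\<^sub>m n) i)"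
    using mat_trace_congruence[OF one_carrier_mat E] E by simp
  then show ?thesis using assms unfolding psd_mat_def by (simp add: Re_sum sum_nonneg)
qed

section \<open>A log-determinant inequality\<close>

lemma det_congruence_identity:
  assumes S: "S \<in> carrier_mat n n" and Y: "Y \<in> carrier_mat n n" and X: "X \<in> carrier_mat n n"
    and SYS: "mat_adjoint S * Y * S = 1\<^sub>m n"
  shows "det X = det Y * det (mat_adjoint S * X * S)"
proof -
  have "det (mat_adjoint S * Y * S) = det (mat_adjoint S) * det Y * det S"
    using S Y by (simp add: det_mult[of _ n])
  then have SYS': "det (mat_adjoint S) * det Y * det S = 1" using SYS by simp
  have "det Y * det (mat_adjoint S * X * S) = det Y * (det (mat_adjoint S) * det X * det S)"
    using S X by (simp add: det_mult[of _ n])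
  also have "\<dots> = det X * (det (mat_adjoint S) * det Y * det S)" by (simp add: mult_ac)
  finally show ?thesis using SYS' by simp
qed

lemma mat_trace_diag_congruence_le:
  assumes V: "unitary_mat n V" and mu: "\<And>i. i < n \<Longrightarrow> mu i * mu i \<le> 1" and E: "psd_mat n E"
  shows "Re (mat_trace (mat_adjoint (V * real_diag_mat n mu) * E * (V * real_diag_mat n mu))) \<le> Re (mat_trace E)"
proof -
  have Vc: "V \<in> carrier_mat n n" using V unitary_mat_carrier by auto
  have Ec: "E \<in> carrier_mat n n" using E psd_mat_def by auto
  have "Re (mat_trace (mat_adjoint (V * real_diag_mat n mu) * E * (V * real_diag_mat n mu)))
      = (\<Sum>i<n. quad_form E (col (V * real_diag_mat n mu) i))"
    using mat_trace_congruence[OF _ Ec, of "V * real_diag_mat n mu"] Vc by (simp add: Re_sum)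
  also have "\<dots> = (\<Sum>i<n. mu i * mu i * quad_form E (col V i))"
    by (rule sum.cong) (use Vc Ec in \<open>auto simp: col_mult_real_diag_mat quad_form_smult_vec\<close>)
  also have "\<dots> \<le> (\<Sum>i<n. quad_form E (col V i))"
  proof (rule sum_mono)
    fix i assume "i \<in> {..<n}"
    then have "i < n" by simp
    moreover have "quad_form E (col V i) \<ge> 0" using E Vc \<open>i < n\<close> unfolding psd_mat_def by simp
    ultimately show "mu i * mu i * quad_form E (col V i) \<le> quad_form E (col V i)"
      using mu by (simp add: mult_left_le_one_le)
  qed
  also have "\<dots> = Re (mat_trace E)"
    using mat_trace_congruence[OF Vc Ec] mat_trace_unitary_congruence[OF V Ec] by (simp add: Re_sum)
  finally show ?thesis .
qed

text \<open>With \<open>1 + B = V diag(\<lambda>) V\<^sup>*\<close>, the matrix \<open>S = V diag(\<lambda>\<^sup>-\<^sup>1\<^sup>/\<^sup>2)\<close> whitens \<open>1 + B\<close>; since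
  \<open>\<lambda> \<ge> 1\<close>, conjugation by \<open>S\<close> can only shrink traces of positive semidefinite matrices.\<close>

lemma exists_whitening:
  assumes B: "psd_mat n B"
  obtains S b where "S \<in> carrier_mat n n" "mat_adjoint S * (1\<^sub>m n + B) * S = 1\<^sub>m n"
    "det (1\<^sub>m n + B) = complex_of_real b" "b \<ge> 1"
    "\<And>E. psd_mat n E \<Longrightarrow> Re (mat_trace (mat_adjoint S * E * S)) \<le> Re (mat_trace E)"
proof -
  have Bc: "B \<in> carrier_mat n n" and hB: "mat_adjoint B = B" using B psd_mat_def by auto
  have IBc: "1\<^sub>m n + B \<in> carrier_mat n n" using Bc by simp
  obtain V lam where V: "unitary_mat n V" and IB: "1\<^sub>m n + B = V * real_diag_mat n lam * mat_adjoint V"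
    using hermitian_spectral_decomposition[OF IBc] Bc hB by (metis mat_adjoint_add mat_adjoint_one one_carrier_mat)
  have Vc: "V \<in> carrier_mat n n" using V unitary_mat_carrier by auto
  have "1 * sq_norm_cvec x \<le> quad_form (1\<^sub>m n + B) x" if "x \<in> carrier_vec n" for x
    using quad_form_one_plus[OF Bc that] B that unfolding psd_mat_def by simp
  then have lam: "lam i \<ge> 1" if "i < n" for i
    using udu_eigenvalue_lower_bound[OF V that] unfolding IB by blast
  define mu where "mu i = 1 / sqrt (lam i)" for i
  have mu: "mu i * mu i \<le> 1" "mu i * (lam i * mu i) = 1" if "i < n" for i
    using lam[OF that] unfolding mu_def by (simp_all add: field_simps)
  define S where "S = V * real_diag_mat n mu"
  have Sc: "S \<in> carrier_mat n n" unfolding S_def using Vc by simp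
  have "mat_adjoint S * (1\<^sub>m n + B) * S
      = real_diag_mat n mu * (mat_adjoint V * (V * (real_diag_mat n lam * (mat_adjoint V * (V * real_diag_mat n mu)))))"
    unfolding IB S_def using Vc
    by (simp add: mat_adjoint_mult[OF Vc real_diag_mat_carrier] assoc_mult_mat[of _ n n _ n _ n])
  also have "\<dots> = real_diag_mat n mu * (real_diag_mat n lam * real_diag_mat n mu)"
    by (simp add: unitary_mat_cancel(1)[OF V, of "real_diag_mat n mu" n]
        unitary_mat_cancel(1)[OF V, of "real_diag_mat n lam * real_diag_mat n mu" n])
  also have "\<dots> = 1\<^sub>m n"
    unfolding real_diag_mat_mult real_diag_mat_one[symmetric] by (rule real_diag_mat_cong) (use mu in simp)
  finally have SIS: "mat_adjoint S * (1\<^sub>m n + B) * S = 1\<^sub>m n" .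
  have det: "det (1\<^sub>m n + B) = complex_of_real (\<Prod>i<n. lam i)" unfolding IB by (rule det_udu[OF V])
  have "(\<Prod>i<n. lam i) \<ge> 1" by (rule prod_ge_1) (use lam in auto)
  moreover have "Re (mat_trace (mat_adjoint S * E * S)) \<le> Re (mat_trace E)" if "psd_mat n E" for E
    unfolding S_def using mat_trace_diag_congruence_le[OF V _ that] mu(1) by blast
  ultimately show ?thesis using that Sc SIS det by blast
qed

lemma prod_le_exp_trace:
  assumes W: "unitary_mat n W" and F: "F \<in> carrier_mat n n"
    and g: "\<And>i. i < n \<Longrightarrow> 0 \<le> g i \<and> g i \<le> 1 + quad_form F (col W i)"
  shows "(\<Prod>i<n. g i) \<le> exp (Re (mat_trace F))"
proof -
  have "(\<Prod>i<n. g i) \<le> (\<Prod>i<n. exp (quad_form F (col W i)))"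
  proof (rule prod_mono)
    fix i assume "i \<in> {..<n}"
    then have "i < n" by simp
    then show "0 \<le> g i \<and> g i \<le> exp (quad_form F (col W i))"
      using g[of i] exp_ge_add_one_self[of "quad_form F (col W i)"] by (intro conjI) linarith+
  qed
  also have "\<dots> = exp (\<Sum>i<n. quad_form F (col W i))" by (simp add: exp_sum)
  also have "(\<Sum>i<n. quad_form F (col W i)) = Re (mat_trace (mat_adjoint W * F * W))"
    using mat_trace_congruence[OF unitary_mat_carrier[OF W] F] by (simp add: Re_sum)
  finally show ?thesis using mat_trace_unitary_congruence[OF W F] by simp
qed

lemma ln_mult_diff_le:
  fixes b p t :: real
  assumes b: "b \<ge> 1" and p: "0 \<le> p" "p \<le> exp t" and t: "t \<ge> 0"
  shows "ln (b * p) - ln b \<le> t"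
proof (cases "p = 0")
  case True
  then show ?thesis using ln_ge_zero[OF b] t by simp
next
  case False
  then have "ln (b * p) - ln b = ln p" using b p by (simp add: ln_mult)
  also have "\<dots> \<le> t" using p False by (metis ln_exp ln_le_cancel_iff exp_gt_zero order_le_less)
  finally show ?thesis .
qed

text \<open>If \<open>A \<le> B + E\<close> in the Loewner order then \<open>log det(1 + A) - log det(1 + B) \<le> tr E\<close>: after whitening
  \<open>1 + B\<close> to the identity, every eigenvalue \<open>\<gamma>\<^sub>i\<close> of the transformed \<open>1 + A\<close> satisfies
  \<open>\<gamma>\<^sub>i \<le> 1 + e\<^sub>i \<le> exp e\<^sub>i\<close>, where the \<open>e\<^sub>i\<close> sum to the trace of the transformed \<open>E\<close>.\<close>

lemma log_det_diff_le_trace: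
  assumes A: "psd_mat n A" and B: "psd_mat n B" and E: "psd_mat n E"
    and le: "\<And>x. x \<in> carrier_vec n \<Longrightarrow> quad_form A x \<le> quad_form B x + quad_form E x"
  shows "ln (Re (det (1\<^sub>m n + A))) - ln (Re (det (1\<^sub>m n + B))) \<le> Re (mat_trace E)"
proof -
  have Ac: "A \<in> carrier_mat n n" and Bc: "B \<in> carrier_mat n n" and Ec: "E \<in> carrier_mat n n"
    using A B E psd_mat_def by auto
  obtain S b where Sc: "S \<in> carrier_mat n n" and SIS: "mat_adjoint S * (1\<^sub>m n + B) * S = 1\<^sub>m n"
    and b: "det (1\<^sub>m n + B) = complex_of_real b" "b \<ge> 1"
    and tr: "\<And>E. psd_mat n E \<Longrightarrow> Re (mat_trace (mat_adjoint S * E * S)) \<le> Re (mat_trace E)"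
    using exists_whitening[OF B] by blast
  define M where "M = mat_adjoint S * (1\<^sub>m n + A) * S"
  have Mc: "M \<in> carrier_mat n n" unfolding M_def using Sc Ac by simp
  have "mat_adjoint M = M"
    unfolding M_def using Ac Sc psd_mat_def A
    by (intro mat_adjoint_congruence_hermitian) (auto simp: mat_adjoint_add[of "1\<^sub>m n" n n A])
  then obtain W gam where W: "unitary_mat n W" and MW: "M = W * real_diag_mat n gam * mat_adjoint W"
    using hermitian_spectral_decomposition[OF Mc] by blast
  have Wc: "W \<in> carrier_mat n n" using W unitary_mat_carrier by auto
  define F where "F = mat_adjoint S * E * S"
  have Fc: "F \<in> carrier_mat n n" unfolding F_def using Sc Ec by simp
  have gam: "0 \<le> gam i \<and> gam i \<le> 1 + quad_form F (col W i)" if i: "i < n" for i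
  proof -
    define z where "z = S *\<^sub>v col W i"
    have c: "col W i \<in> carrier_vec n" using Wc i by simp
    have z: "z \<in> carrier_vec n" unfolding z_def using Sc c by simp
    have "complex_of_real (gam i) = (M *\<^sub>v col W i) \<bullet>c col W i"
      unfolding MW by (rule quad_form_udu_col[OF W i, symmetric])
    also have "\<dots> = ((1\<^sub>m n + A) *\<^sub>v z) \<bullet>c z"
      unfolding M_def z_def by (rule quad_form_congruence[OF Sc _ c]) (use Ac in simp)
    also have "\<dots> = z \<bullet>c z + (A *\<^sub>v z) \<bullet>c z" by (rule quad_form_one_plus[OF Ac z])
    finally have "gam i = sq_norm_cvec z + quad_form A z" by (metis Re_complex_of_real plus_complex.sel(1))
    moreover have "1 = sq_norm_cvec z + quad_form B z"
      using arg_cong[OF quad_form_congruence[OF Sc _ c, of "1\<^sub>m n + B"], of Re] SIS c Bc z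
        unitary_mat_col_norm[OF W i] unfolding z_def by (simp add: quad_form_one_plus)
    moreover have "quad_form F (col W i) = quad_form E z"
      unfolding F_def z_def using quad_form_congruence[OF Sc Ec c] by simp
    moreover have "quad_form A z \<ge> 0" using A z unfolding psd_mat_def by blast
    ultimately show ?thesis using le[OF z] sq_norm_cvec_nonneg[of z] by (intro conjI) linarith+
  qed
  have detA: "Re (det (1\<^sub>m n + A)) = b * (\<Prod>i<n. gam i)"
    using det_congruence_identity[OF Sc _ _ SIS, of "1\<^sub>m n + A"] Ac Bc b(1) det_udu[OF W, of gam]
    unfolding M_def[symmetric] MW by (simp del: of_real_prod flip: of_real_mult)
  have prod_le: "(\<Prod>i<n. gam i) \<le> exp (Re (mat_trace E))"
    using prod_le_exp_trace[OF W Fc gam] tr[OF E] unfolding F_def by (meson exp_le_cancel_iff order_trans)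
  have "(\<Prod>i<n. gam i) \<ge> 0" by (rule prod_nonneg) (use gam in blast)
  then show ?thesis
    using ln_mult_diff_le[OF b(2) _ prod_le Re_mat_trace_psd_nonneg[OF E]] detA b(1) by simp
qed

section \<open>Log-determinants of the channel\<close>

lemma det_one_plus_mult_comm:
  assumes P: "(P::complex mat) \<in> carrier_mat m n" and Q: "Q \<in> carrier_mat n m"
  shows "det (1\<^sub>m m + P * Q) = det (1\<^sub>m n + Q * P)"
proof -
  define R where "R = four_block_mat (1\<^sub>m m) (- P) Q (1\<^sub>m n)"
  define L where "L = four_block_mat (1\<^sub>m m) P (0\<^sub>m n m) (1\<^sub>m n)"
  have Rc: "R \<in> carrier_mat (m + n) (m + n)" and Lc: "L \<in> carrier_mat (m + n) (m + n)"
    unfolding R_def L_def by simp_all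
  have PmP: "P + - P = 0\<^sub>m m n" using P by (intro eq_matI) auto
  have m0: "- 0\<^sub>m n n = (0\<^sub>m n n :: complex mat)" by (intro eq_matI) auto
  have "L * R = four_block_mat (1\<^sub>m m * 1\<^sub>m m + P * Q) (1\<^sub>m m * - P + P * 1\<^sub>m n)
      (0\<^sub>m n m * 1\<^sub>m m + 1\<^sub>m n * Q) (0\<^sub>m n m * - P + 1\<^sub>m n * 1\<^sub>m n)"
    unfolding L_def R_def by (rule mult_four_block_mat) (use P Q in auto)
  also have "\<dots> = four_block_mat (1\<^sub>m m + P * Q) (0\<^sub>m m n) Q (1\<^sub>m n)"
    using P Q PmP m0 by simp
  finally have LR: "L * R = four_block_mat (1\<^sub>m m + P * Q) (0\<^sub>m m n) Q (1\<^sub>m n)" .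
  have "R * L = four_block_mat (1\<^sub>m m * 1\<^sub>m m + - P * 0\<^sub>m n m) (1\<^sub>m m * P + - P * 1\<^sub>m n)
      (Q * 1\<^sub>m m + 1\<^sub>m n * 0\<^sub>m n m) (Q * P + 1\<^sub>m n * 1\<^sub>m n)"
    unfolding L_def R_def by (rule mult_four_block_mat) (use P Q in auto)
  also have "\<dots> = four_block_mat (1\<^sub>m m) (0\<^sub>m m n) Q (1\<^sub>m n + Q * P)"
    using P Q PmP by (simp add: comm_add_mat[of "Q * P" n n])
  finally have RL: "R * L = four_block_mat (1\<^sub>m m) (0\<^sub>m m n) Q (1\<^sub>m n + Q * P)" .
  have dL: "det L = 1" unfolding L_def
    by (subst det_four_block_mat_lower_left_zero[of _ m _ n]) (use P in auto)
  have "det (1\<^sub>m m + P * Q) = det (L * R)"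
    unfolding LR by (subst det_four_block_mat_upper_right_zero[of _ m _ n]) (use P Q in auto)
  also have "\<dots> = det (R * L)" using det_mult[OF Lc Rc] det_mult[OF Rc Lc] dL by simp
  also have "\<dots> = det (1\<^sub>m n + Q * P)"
    unfolding RL by (subst det_four_block_mat_upper_right_zero[of _ m _ n]) (use P Q in auto)
  finally show ?thesis .
qed

lemma logdet_term_factor:
  assumes H: "(H::complex mat) \<in> carrier_mat m n" and L: "L \<in> carrier_mat n n"
  shows "logdet_term H N (L * mat_adjoint L)
    = ln (Re (det (1\<^sub>m n + complex_of_real (1 / N) \<cdot>\<^sub>m (mat_adjoint L * (mat_adjoint H * H) * L))))"
proof -
  let ?r = "complex_of_real (1 / N)" and ?P = "H * L" and ?Q = "mat_adjoint L * mat_adjoint H"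
  have aL: "mat_adjoint L \<in> carrier_mat n n" and aH: "mat_adjoint H \<in> carrier_mat n m" using L H by auto
  have P: "?P \<in> carrier_mat m n" and Q: "?Q \<in> carrier_mat n m" using H L aL aH by auto
  have "H * (L * mat_adjoint L) * mat_adjoint H = H * (L * (mat_adjoint L * mat_adjoint H))"
    using H L aL aH by (simp add: assoc_mult_mat[of _ m n _ n _ m] assoc_mult_mat[of _ n n _ n _ m])
  also have "\<dots> = ?P * ?Q" by (rule assoc_mult_mat[symmetric]) (use H L aL aH in auto)
  finally have "H * (L * mat_adjoint L) * mat_adjoint H = ?P * ?Q" .
  then have PQ: "?r \<cdot>\<^sub>m (H * (L * mat_adjoint L) * mat_adjoint H) = ?P * (?r \<cdot>\<^sub>m ?Q)"
    using mult_smult_distrib[OF P Q] by simp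
  have "mat_adjoint L * (mat_adjoint H * H) * L = mat_adjoint L * ((mat_adjoint H * H) * L)"
    by (rule assoc_mult_mat) (use H L aL aH in auto)
  also have "(mat_adjoint H * H) * L = mat_adjoint H * (H * L)"
    by (rule assoc_mult_mat) (use H L aL aH in auto)
  also have "mat_adjoint L * (mat_adjoint H * (H * L)) = ?Q * ?P"
    by (rule assoc_mult_mat[symmetric]) (use H L aL aH in auto)
  finally have "mat_adjoint L * (mat_adjoint H * H) * L = ?Q * ?P" .
  then have QP: "?r \<cdot>\<^sub>m (mat_adjoint L * (mat_adjoint H * H) * L) = (?r \<cdot>\<^sub>m ?Q) * ?P"
    using mult_smult_assoc_mat[OF Q P] by simp
  show ?thesis
    unfolding logdet_term_def PQ QP using H det_one_plus_mult_comm[OF P smult_carrier_mat[OF Q]] by simp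
qed

lemma logdet_term_zero:
  assumes H: "(H::complex mat) \<in> carrier_mat m n" shows "logdet_term H N (0\<^sub>m n n) = 0"
proof -
  have "H * 0\<^sub>m n n * mat_adjoint H = 0\<^sub>m m m" using H by (intro eq_matI) (auto simp: scalar_prod_def)
  then show ?thesis unfolding logdet_term_def using H by simp
qed

definition rank_one_mat :: "nat \<Rightarrow> complex vec \<Rightarrow> complex mat" where
  "rank_one_mat n u = mat n n (\<lambda>(i,j). u $ i * cnj (u $ j))"

lemma rank_one_mat_carrier[simp]: "rank_one_mat n u \<in> carrier_mat n n"
  unfolding rank_one_mat_def by simp

lemma rank_one_mat_factor:
  "u \<in> carrier_vec n \<Longrightarrow> rank_one_mat n u = mat_of_cols n [u] * mat_adjoint (mat_of_cols n [u])"
  by (intro eq_matI) (auto simp: rank_one_mat_def scalar_prod_def mat_of_cols_index)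

lemma det_1x1: "(A::complex mat) \<in> carrier_mat 1 1 \<Longrightarrow> det A = A $$ (0,0)"
  using det_upper_triangular[of A 1] by (simp add: upper_triangular_def diag_mat_def)

lemma det_one_plus_rank_one:
  assumes H: "(H::complex mat) \<in> carrier_mat m n" and u: "u \<in> carrier_vec n"
  shows "det (1\<^sub>m m + c \<cdot>\<^sub>m (H * rank_one_mat n u * mat_adjoint H)) = 1 + c * ((H *\<^sub>v u) \<bullet>c (H *\<^sub>v u))"
proof -
  define V where "V = mat_of_cols n [u]"
  have Vc: "V \<in> carrier_mat n 1" unfolding V_def using mat_of_cols_carrier(1)[of n "[u]"] by simp
  define P where "P = H * V"
  have Pc: "P \<in> carrier_mat m 1" unfolding P_def using H Vc by simp
  have "H * rank_one_mat n u * mat_adjoint H = H * ((V * mat_adjoint V) * mat_adjoint H)"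
    unfolding rank_one_mat_factor[OF u] V_def[symmetric] by (rule assoc_mult_mat) (use H Vc in auto)
  also have "(V * mat_adjoint V) * mat_adjoint H = V * (mat_adjoint V * mat_adjoint H)"
    by (rule assoc_mult_mat) (use H Vc in auto)
  also have "H * (V * (mat_adjoint V * mat_adjoint H)) = P * mat_adjoint P"
    unfolding P_def mat_adjoint_mult[OF H Vc] by (rule assoc_mult_mat[symmetric]) (use H Vc in auto)
  finally have PQ: "c \<cdot>\<^sub>m (H * rank_one_mat n u * mat_adjoint H) = P * (c \<cdot>\<^sub>m mat_adjoint P)"
    using Pc by (simp add: mult_smult_distrib[of _ m 1 _ m])
  have "det (1\<^sub>m m + c \<cdot>\<^sub>m (H * rank_one_mat n u * mat_adjoint H)) = (1\<^sub>m 1 + (c \<cdot>\<^sub>m mat_adjoint P) * P) $$ (0,0)"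
  proof -
    have Q: "c \<cdot>\<^sub>m mat_adjoint P \<in> carrier_mat 1 m" using Pc by simp
    then have "1\<^sub>m 1 + (c \<cdot>\<^sub>m mat_adjoint P) * P \<in> carrier_mat 1 1"
      using mult_carrier_mat[OF Q Pc] by simp
    then show ?thesis using det_one_plus_mult_comm[OF Pc Q] det_1x1 PQ by simp
  qed
  also have "\<dots> = 1 + c * (col P 0 \<bullet>c col P 0)"
    using Pc by (simp add: scalar_prod_def sum_distrib_left mult_ac)
  also have "col P 0 = H *\<^sub>v u" unfolding P_def V_def using H u
    by (simp add: col_mult2[OF H, of _ 1] mat_of_cols_carrier(1)[of n "[u]", simplified] col_mat_of_cols)
  finally show ?thesis .
qed

lemma smult_smult_mat: "a \<cdot>\<^sub>m (b \<cdot>\<^sub>m X) = (a * b :: 'a :: semigroup_mult) \<cdot>\<^sub>m X"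
  by (intro eq_matI) (auto simp: mult.assoc)

lemma logdet_term_rank_one:
  assumes H: "(H::complex mat) \<in> carrier_mat m n" and u: "u \<in> carrier_vec n"
  shows "logdet_term H N (complex_of_real P \<cdot>\<^sub>m rank_one_mat n u) = ln (1 + P / N * sq_norm_cvec (H *\<^sub>v u))"
proof -
  have "H * (complex_of_real P \<cdot>\<^sub>m rank_one_mat n u) * mat_adjoint H
      = complex_of_real P \<cdot>\<^sub>m (H * rank_one_mat n u * mat_adjoint H)"
    using H by (simp add: mult_smult_distrib[OF H rank_one_mat_carrier] mult_smult_assoc_mat[of _ m n _ m])
  then show ?thesis
    unfolding logdet_term_def using det_one_plus_rank_one[OF H u, of "complex_of_real (P / N)"] H
    by (simp add: smult_smult_mat)
qed

lemma psd_mat_rank_one: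
  assumes u: "u \<in> carrier_vec n" and P: "P \<ge> 0"
  shows "psd_mat n (complex_of_real P \<cdot>\<^sub>m rank_one_mat n u)"
proof -
  have V: "mat_adjoint (mat_of_cols n [u]) \<in> carrier_mat 1 n"
    using mat_of_cols_carrier(1)[of n "[u]"] by simp
  show ?thesis
    using psd_mat_scaled_congruence_gram[OF V one_carrier_mat P] rank_one_mat_factor[OF u] V
    by simp
qed

lemma mat_trace_rank_one:
  assumes u: "u \<in> carrier_vec n" and uu: "u \<bullet>c u = 1"
  shows "Re (mat_trace (complex_of_real P \<cdot>\<^sub>m rank_one_mat n u)) = P"
proof -
  have "mat_trace (rank_one_mat n u) = u \<bullet>c u"
    unfolding mat_trace_def rank_one_mat_def using u by (simp add: scalar_prod_def lessThan_atLeast0)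
  then show ?thesis using mat_trace_smult[OF rank_one_mat_carrier, of "complex_of_real P" n u] uu by simp
qed

section \<open>Bounds on the secrecy capacity\<close>

definition secrecy_matrix :: "complex mat \<Rightarrow> complex mat \<Rightarrow> real \<Rightarrow> real \<Rightarrow> complex mat" where
  "secrecy_matrix Hm He Nm Ne = mat_adjoint Hm * Hm - complex_of_real (Nm / Ne) \<cdot>\<^sub>m (mat_adjoint He * He)"

lemma secrecy_matrix_carrier:
  "Hm \<in> carrier_mat k n \<Longrightarrow> He \<in> carrier_mat l n \<Longrightarrow> secrecy_matrix Hm He Nm Ne \<in> carrier_mat n n"
  unfolding secrecy_matrix_def by (metis mat_adjoint_carrier minus_carrier_mat mult_carrier_mat smult_carrier_mat)

lemma secrecy_matrix_hermitian:
  "Hm \<in> carrier_mat k n \<Longrightarrow> He \<in> carrier_mat l n \<Longrightarrow>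
   mat_adjoint (secrecy_matrix Hm He Nm Ne) = secrecy_matrix Hm He Nm Ne"
  unfolding secrecy_matrix_def
  by (subst mat_adjoint_minus[of _ n n]) (auto simp: mat_adjoint_smult mat_adjoint_gram mult_carrier_mat[of _ n k])

lemma quad_form_secrecy_matrix:
  assumes Hm: "(Hm::complex mat) \<in> carrier_mat k n" and He: "He \<in> carrier_mat l n" and z: "z \<in> carrier_vec n"
  shows "quad_form (secrecy_matrix Hm He Nm Ne) z = sq_norm_cvec (Hm *\<^sub>v z) - Nm / Ne * sq_norm_cvec (He *\<^sub>v z)"
proof -
  have Gm: "mat_adjoint Hm * Hm \<in> carrier_mat n n" and Ge: "mat_adjoint He * He \<in> carrier_mat n n"
    using mult_carrier_mat[OF mat_adjoint_carrier[OF Hm] Hm] mult_carrier_mat[OF mat_adjoint_carrier[OF He] He] .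
  have "(secrecy_matrix Hm He Nm Ne *\<^sub>v z) \<bullet>c z
      = ((mat_adjoint Hm * Hm) *\<^sub>v z) \<bullet>c z - ((complex_of_real (Nm / Ne) \<cdot>\<^sub>m (mat_adjoint He * He)) *\<^sub>v z) \<bullet>c z"
    unfolding secrecy_matrix_def by (rule quad_form_minus) (use Gm Ge z in auto)
  also have "\<dots> = (Hm *\<^sub>v z) \<bullet>c (Hm *\<^sub>v z) - complex_of_real (Nm / Ne) * ((He *\<^sub>v z) \<bullet>c (He *\<^sub>v z))"
    using quad_form_gram[OF Hm z] quad_form_gram[OF He z] quad_form_smult[OF Ge z] by simp
  finally show ?thesis by simp
qed

text \<open>Writing \<open>K = L L\<^sup>*\<close>, the two log-determinants become \<open>log det(1 + A)\<close> and \<open>log det(1 + B)\<close> with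
  \<open>A = L\<^sup>* H\<^sub>m\<^sup>* H\<^sub>m L / N\<^sub>m\<close> and \<open>B = L\<^sup>* H\<^sub>e\<^sup>* H\<^sub>e L / N\<^sub>e\<close>, and the hypothesis on \<open>\<Phi>\<close> says
  exactly that \<open>A \<le> B + c L\<^sup>* L / N\<^sub>m\<close>.\<close>

lemma secrecy_rate_le_trace:
  assumes Hm: "Hm \<in> carrier_mat nR nT" and He: "He \<in> carrier_mat nE nT" and Nm: "Nm > 0" and Ne: "Ne > 0"
    and c: "c \<ge> 0"
    and Phi: "\<And>w. w \<in> carrier_vec nT \<Longrightarrow> quad_form (secrecy_matrix Hm He Nm Ne) w \<le> c * sq_norm_cvec w"
    and K: "psd_mat nT K"
  shows "secrecy_rate Hm He Nm Ne K \<le> c * Re (mat_trace K) / Nm"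
proof -
  obtain L where L: "L \<in> carrier_mat nT nT" and KL: "K = L * mat_adjoint L" using psd_mat_factor[OF K] by blast
  define I where "I = (1\<^sub>m nT :: complex mat)"
  define A where "A = complex_of_real (1 / Nm) \<cdot>\<^sub>m (mat_adjoint L * (mat_adjoint Hm * Hm) * L)"
  define B where "B = complex_of_real (1 / Ne) \<cdot>\<^sub>m (mat_adjoint L * (mat_adjoint He * He) * L)"
  define E where "E = complex_of_real (c / Nm) \<cdot>\<^sub>m (mat_adjoint L * (mat_adjoint I * I) * L)"
  have I: "I \<in> carrier_mat nT nT" unfolding I_def by simp
  have psdA: "psd_mat nT A" unfolding A_def by (rule psd_mat_scaled_congruence_gram[OF Hm L]) (use Nm in simp)
  have psdB: "psd_mat nT B" unfolding B_def by (rule psd_mat_scaled_congruence_gram[OF He L]) (use Ne in simp)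
  have psdE: "psd_mat nT E" unfolding E_def by (rule psd_mat_scaled_congruence_gram[OF I L]) (use Nm c in simp)
  have "quad_form A x \<le> quad_form B x + quad_form E x" if x: "x \<in> carrier_vec nT" for x
  proof -
    let ?z = "L *\<^sub>v x"
    have z: "?z \<in> carrier_vec nT" using L x by simp
    have "sq_norm_cvec (Hm *\<^sub>v ?z) - Nm / Ne * sq_norm_cvec (He *\<^sub>v ?z) \<le> c * sq_norm_cvec ?z"
      using Phi[OF z] unfolding quad_form_secrecy_matrix[OF Hm He z] .
    then have "(sq_norm_cvec (Hm *\<^sub>v ?z) - Nm / Ne * sq_norm_cvec (He *\<^sub>v ?z)) / Nm \<le> c * sq_norm_cvec ?z / Nm"
      using Nm by (intro divide_right_mono) auto
    moreover have "(sq_norm_cvec (Hm *\<^sub>v ?z) - Nm / Ne * sq_norm_cvec (He *\<^sub>v ?z)) / Nm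
        = sq_norm_cvec (Hm *\<^sub>v ?z) / Nm - sq_norm_cvec (He *\<^sub>v ?z) / Ne"
      using Nm Ne by (simp add: field_simps)
    moreover have "I *\<^sub>v ?z = ?z" unfolding I_def using z by simp
    ultimately show ?thesis
      unfolding A_def B_def E_def quad_form_scaled_congruence_gram[OF Hm L x]
        quad_form_scaled_congruence_gram[OF He L x] quad_form_scaled_congruence_gram[OF I L x]
      by simp
  qed
  then have "ln (Re (det (1\<^sub>m nT + A))) - ln (Re (det (1\<^sub>m nT + B))) \<le> Re (mat_trace E)"
    by (rule log_det_diff_le_trace[OF psdA psdB psdE])
  moreover have "mat_trace E = complex_of_real (c / Nm) * mat_trace K"
    unfolding E_def I_def KL using L mat_trace_smult[of "mat_adjoint L * L" nT] mat_trace_mult_comm[of L nT nT]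
    by simp
  moreover have "secrecy_rate Hm He Nm Ne K = ln (Re (det (1\<^sub>m nT + A))) - ln (Re (det (1\<^sub>m nT + B)))"
    unfolding secrecy_rate_def KL A_def B_def logdet_term_factor[OF Hm L] logdet_term_factor[OF He L] ..
  ultimately show ?thesis by simp
qed

lemma secrecy_rate_le_power:
  assumes Hm: "Hm \<in> carrier_mat nR nT" and He: "He \<in> carrier_mat nE nT" and Nm: "Nm > 0" and Ne: "Ne > 0"
    and c: "c \<ge> 0"
    and Phi: "\<And>w. w \<in> carrier_vec nT \<Longrightarrow> quad_form (secrecy_matrix Hm He Nm Ne) w \<le> c * sq_norm_cvec w"
    and K: "psd_mat nT K" and tr: "Re (mat_trace K) \<le> real nR * Nm * snr"
  shows "secrecy_rate Hm He Nm Ne K \<le> c * real nR * snr"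
proof -
  have "c * Re (mat_trace K) / Nm \<le> c * (real nR * Nm * snr) / Nm"
    using tr c Nm by (intro divide_right_mono mult_left_mono) auto
  then show ?thesis using secrecy_rate_le_trace[OF Hm He Nm Ne c Phi K] Nm by simp
qed

lemma secrecy_capacity_le:
  assumes Hm: "Hm \<in> carrier_mat nR nT" and He: "He \<in> carrier_mat nE nT" and Nm: "Nm > 0" and Ne: "Ne > 0"
    and c: "c \<ge> 0"
    and Phi: "\<And>w. w \<in> carrier_vec nT \<Longrightarrow> quad_form (secrecy_matrix Hm He Nm Ne) w \<le> c * sq_norm_cvec w"
    and nR: "nR \<ge> 1" and snr: "snr \<ge> 0"
  shows "secrecy_capacity nT Hm He Nm Ne snr \<le> c * snr"
proof -
  let ?S = "{secrecy_rate Hm He Nm Ne K | K. psd_mat nT K \<and> Re (mat_trace K) \<le> real (dim_row Hm) * Nm * snr}"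
  have "secrecy_rate Hm He Nm Ne (0\<^sub>m nT nT) = 0"
    unfolding secrecy_rate_def using logdet_term_zero[OF Hm] logdet_term_zero[OF He] by simp
  moreover have "psd_mat nT (0\<^sub>m nT nT)" unfolding psd_mat_def by (auto simp: scalar_prod_def)
  ultimately have "0 \<in> ?S" using Hm Nm snr by (force simp: mat_trace_def)
  moreover have "x \<le> c * real nR * snr" if "x \<in> ?S" for x
    using that secrecy_rate_le_power[OF Hm He Nm Ne c Phi] Hm by auto
  ultimately have "Sup ?S \<le> c * real nR * snr" by (intro cSup_least) auto
  then show ?thesis unfolding secrecy_capacity_def using Hm nR by (simp add: field_simps)
qed

text \<open>Beamforming all the power \<open>P = n\<^sub>R N\<^sub>m SNR\<close> along a unit vector \<open>u\<close> achieves the rate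
  \<open>log(1 + x) - log(1 + y)\<close> with \<open>x - y = n\<^sub>R SNR u\<^sup>* \<Phi> u\<close>, and \<open>log(1 + x) - log(1 + y) \<ge> (x - y) / (1 + x)\<close>.\<close>

lemma secrecy_capacity_ge_rank_one:
  assumes Hm: "Hm \<in> carrier_mat nR nT" and He: "He \<in> carrier_mat nE nT" and Nm: "Nm > 0" and Ne: "Ne > 0"
    and c: "c \<ge> 0"
    and Phi: "\<And>w. w \<in> carrier_vec nT \<Longrightarrow> quad_form (secrecy_matrix Hm He Nm Ne) w \<le> c * sq_norm_cvec w"
    and nR: "nR \<ge> 1" and snr: "snr > 0" and u: "u \<in> carrier_vec nT" "u \<bullet>c u = 1"
  shows "snr * quad_form (secrecy_matrix Hm He Nm Ne) u / (1 + real nR * sq_norm_cvec (Hm *\<^sub>v u) * snr)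
    \<le> secrecy_capacity nT Hm He Nm Ne snr"
proof -
  let ?S = "{secrecy_rate Hm He Nm Ne K | K. psd_mat nT K \<and> Re (mat_trace K) \<le> real (dim_row Hm) * Nm * snr}"
  define P where "P = real nR * Nm * snr"
  define x where "x = P / Nm * sq_norm_cvec (Hm *\<^sub>v u)"
  define y where "y = P / Ne * sq_norm_cvec (He *\<^sub>v u)"
  have "P \<ge> 0" unfolding P_def using Nm snr by simp
  then have xy: "x \<ge> 0" "y \<ge> 0" unfolding x_def y_def using Nm Ne sq_norm_cvec_nonneg by auto
  define K where "K = complex_of_real P \<cdot>\<^sub>m rank_one_mat nT u"
  have "secrecy_rate Hm He Nm Ne K = ln (1 + x) - ln (1 + y)"
    unfolding secrecy_rate_def K_def logdet_term_rank_one[OF Hm u(1)] logdet_term_rank_one[OF He u(1)] x_def y_def ..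
  moreover have "psd_mat nT K" unfolding K_def by (rule psd_mat_rank_one[OF u(1) \<open>P \<ge> 0\<close>])
  ultimately have in_S: "ln (1 + x) - ln (1 + y) \<in> ?S"
    using mat_trace_rank_one[OF u, of P] Hm unfolding K_def P_def by force
  have "bdd_above ?S"
    using secrecy_rate_le_power[OF Hm He Nm Ne c Phi] Hm unfolding bdd_above_def by force
  have "ln ((1 + y) / (1 + x)) \<le> (1 + y) / (1 + x) - 1" using xy by (intro ln_le_minus_one) auto
  then have "(x - y) / (1 + x) \<le> ln (1 + x) - ln (1 + y)" using xy by (simp add: ln_div field_simps)
  also have "\<dots> \<le> Sup ?S" by (rule cSup_upper[OF in_S \<open>bdd_above ?S\<close>])
  also have "(x - y) / (1 + x) = real nR * (snr * quad_form (secrecy_matrix Hm He Nm Ne) u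
      / (1 + real nR * sq_norm_cvec (Hm *\<^sub>v u) * snr))"
    unfolding quad_form_secrecy_matrix[OF Hm He u(1)] x_def y_def P_def using Nm Ne by (simp add: field_simps)
  finally show ?thesis unfolding secrecy_capacity_def using Hm nR by (simp add: field_simps)
qed

lemma hermitian_quad_form_le_lambda_max:
  assumes A: "A \<in> carrier_mat n n" "mat_adjoint A = A" and n: "n > 0" and w: "w \<in> carrier_vec n"
  shows "quad_form A w \<le> lambda_max A * sq_norm_cvec w"
proof -
  obtain U d where U: "unitary_mat n U" and AU: "A = U * real_diag_mat n d * mat_adjoint U"
    using hermitian_spectral_decomposition[OF A] by blast
  show ?thesis
    unfolding AU lambda_max_udu[OF U] by (rule quad_form_udu_le[OF U w]) auto
qed

lemma hermitian_lambda_max_attained: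
  assumes A: "A \<in> carrier_mat n n" "mat_adjoint A = A" and n: "n > 0"
  shows "\<exists>u. u \<in> carrier_vec n \<and> u \<bullet>c u = 1 \<and> quad_form A u = lambda_max A"
proof -
  obtain U d where U: "unitary_mat n U" and AU: "A = U * real_diag_mat n d * mat_adjoint U"
    using hermitian_spectral_decomposition[OF A] by blast
  have "Max (d ` {..<n}) \<in> d ` {..<n}" using n by (intro Max_in) auto
  then obtain i where i: "i < n" and "d i = lambda_max A" unfolding AU lambda_max_udu[OF U] by auto
  then show ?thesis
    using quad_form_udu_col[OF U i, of d] unitary_mat_col_norm[OF U i] unitary_mat_carrier[OF U]
    unfolding AU by (intro exI[of _ "col U i"]) simp
qed

section \<open>Minimum energy per bit\<close>

lemma snr_over_capacity_approx:
  fixes C :: "real \<Rightarrow> real"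
  assumes A: "A \<ge> 0" and lam: "lam > 0" and e: "e > 0"
    and lb: "\<And>s. s > 0 \<Longrightarrow> s * lam / (1 + A * s) \<le> C s"
  obtains s where "s > 0" "C s > 0" "s * ln 2 / C s \<le> ln 2 / lam + e"
proof -
  have ln2: "ln (2::real) > 0" by simp
  define s where "s = e * lam / (ln 2 * (A + 1))"
  have s: "s > 0" unfolding s_def using e lam ln2 A by simp
  have As: "A * s \<le> e * lam / ln 2"
  proof -
    have "A * s = e * lam / ln 2 * (A / (A + 1))" unfolding s_def using A by (simp add: field_simps)
    also have "\<dots> \<le> e * lam / ln 2" using A e lam ln2 by (intro mult_left_le) auto
    finally show ?thesis .
  qed
  have pos: "s * lam / (1 + A * s) > 0" using s lam A by (simp add: add_pos_nonneg)
  then have Cpos: "C s > 0" using lb[OF s] by linarith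
  have "s * ln 2 / C s \<le> s * ln 2 / (s * lam / (1 + A * s))"
    by (rule divide_left_mono[OF lb[OF s]]) (use s ln2 mult_pos_pos[OF Cpos pos] in auto)
  also have "\<dots> = ln 2 / lam + ln 2 * (A * s) / lam" using s lam A by (simp add: field_simps)
  also have "ln 2 * (A * s) / lam \<le> ln 2 * (e * lam / ln 2) / lam"
    using As ln2 lam by (intro divide_right_mono mult_left_mono) auto
  finally show ?thesis using that s Cpos ln2 lam by simp
qed

lemma INF_energy_per_bit:
  fixes C :: "real \<Rightarrow> real"
  assumes A: "A \<ge> 0"
    and ub: "\<And>s. s > 0 \<Longrightarrow> C s \<le> max lam 0 * s"
    and lb: "\<And>s. s > 0 \<Longrightarrow> s * lam / (1 + A * s) \<le> C s"
  shows "(INF s\<in>{0<..}. if C s > 0 then ereal (s * ln 2 / C s) else \<infinity>)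
    = (if max lam 0 > 0 then ereal (ln 2 / max lam 0) else \<infinity>)"
proof (cases "lam > 0")
  case False
  then have "\<not> C s > 0" if "s > 0" for s using ub[OF that] by simp
  then have "(INF s\<in>{0<..}. if C s > 0 then ereal (s * ln 2 / C s) else \<infinity>) = \<infinity>"
    by (intro antisym top_greatest INF_greatest) auto
  then show ?thesis using False by simp
next
  case True
  define f where "f s = (if C s > 0 then ereal (s * ln 2 / C s) else \<infinity>)" for s
  have ln2: "ln (2::real) > 0" by simp
  have "ereal (ln 2 / lam) \<le> f s" if s: "s > 0" for s
  proof (cases "C s > 0")
    case True
    have "s * ln 2 / (lam * s) \<le> s * ln 2 / C s"
      by (rule divide_left_mono) (use ub[OF s] \<open>lam > 0\<close> True s ln2 in auto)
    then show ?thesis unfolding f_def using True s by simp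
  qed (simp add: f_def)
  then have lower: "ereal (ln 2 / lam) \<le> (INF s\<in>{0<..}. f s)" by (intro INF_greatest) auto
  have "(INF s\<in>{0<..}. f s) \<le> ereal (ln 2 / lam) + ereal e" if "e > 0" for e
  proof -
    obtain s where s: "s > 0" "C s > 0" "s * ln 2 / C s \<le> ln 2 / lam + e"
      using snr_over_capacity_approx[OF A True \<open>e > 0\<close> lb] by blast
    then have "f s \<le> ereal (ln 2 / lam) + ereal e" unfolding f_def by simp
    moreover have "(INF s\<in>{0<..}. f s) \<le> f s" by (rule INF_lower) (use s in simp)
    ultimately show ?thesis by (rule order_trans[rotated])
  qed
  then have "(INF s\<in>{0<..}. f s) \<le> ereal (ln 2 / lam)" by (rule ereal_le_epsilon2)
  with lower show ?thesis using True unfolding f_def by simp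
qed

theorem corollary1:
  fixes nT nR nE :: nat and Hm He :: "complex mat" and Nm Ne :: real
  assumes "nT \<ge> 1" "nR \<ge> 1" "nE \<ge> 1"
    and "Hm \<in> carrier_mat nR nT" and "He \<in> carrier_mat nE nT"
    and "Nm > 0" and "Ne > 0"
  defines "Phi \<equiv> mat_adjoint Hm * Hm - complex_of_real (Nm / Ne) \<cdot>\<^sub>m (mat_adjoint He * He)"
  shows "ebn0_s_min nT Hm He Nm Ne =
           (if max (lambda_max Phi) 0 > 0 then ereal (ln 2 / max (lambda_max Phi) 0) else \<infinity>)"
proof -
  note Hm = assms(4) and He = assms(5) and Nm = assms(6) and Ne = assms(7)
  have Phi: "Phi = secrecy_matrix Hm He Nm Ne" unfolding Phi_def secrecy_matrix_def ..
  have herm: "Phi \<in> carrier_mat nT nT" "mat_adjoint Phi = Phi"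
    unfolding Phi using secrecy_matrix_carrier[OF Hm He] secrecy_matrix_hermitian[OF Hm He] by auto
  have nT: "nT > 0" using assms(1) by simp
  have ray: "quad_form (secrecy_matrix Hm He Nm Ne) w \<le> max (lambda_max Phi) 0 * sq_norm_cvec w"
    if "w \<in> carrier_vec nT" for w
    using hermitian_quad_form_le_lambda_max[OF herm nT that]
      mult_right_mono[OF max.cobounded1[of "lambda_max Phi" 0] sq_norm_cvec_nonneg[of w]]
    unfolding Phi by linarith
  obtain u where u: "u \<in> carrier_vec nT" "u \<bullet>c u = 1" "quad_form Phi u = lambda_max Phi"
    using hermitian_lambda_max_attained[OF herm nT] by blast
  show ?thesis
    unfolding ebn0_s_min_def
  proof (rule INF_energy_per_bit)
    show "0 \<le> real nR * sq_norm_cvec (Hm *\<^sub>v u)" by (simp add: sq_norm_cvec_nonneg)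
    show "secrecy_capacity nT Hm He Nm Ne s \<le> max (lambda_max Phi) 0 * s" if "s > 0" for s
      using secrecy_capacity_le[OF Hm He Nm Ne _ ray assms(2)] that by simp
    show "s * lambda_max Phi / (1 + real nR * sq_norm_cvec (Hm *\<^sub>v u) * s) \<le> secrecy_capacity nT Hm He Nm Ne s"
      if "s > 0" for s
      using secrecy_capacity_ge_rank_one[OF Hm He Nm Ne _ ray assms(2) that u(1,2)] u(3) unfolding Phi by simp
  qed
qed

end
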